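(* Let $n\ge2$, $0\le l<k\le n$, $\theta\in(0,\pi)$ and $p>k-l+1$. Suppose $h$ is an admissible solution of $$\frac{\sigma_k(\nabla^2h+h\sigma)}{\sigma_l(\nabla^2h+h\sigma)}=\frac{\binom{n}{k}}{\binom{n}{l}}\left(\frac{h}{\ell}\right)^{p-1}\ \text{ in }\mathcal{C}_\theta,\qquad \nabla_\mu h=\cot\theta\, h\ \text{ on }\partial\mathcal{C}_\theta.$$ Then $h=\ell$.
   Context: Let $e=-E_{n+1}$, $E_1,\dots,E_{n+1}$ the standard basis of $\mathbb{R}^{n+1}$, $\overline{\mathbb{R}^{n+1}_+}=\{x_{n+1}\ge0\}$. $\mathcal{C}_\theta=\{\xi\in\overline{\mathbb{R}^{n+1}_+}:|\xi-\cos\theta\,e|=1\}$ with round metric $\sigma$, connection $\nabla$, unit outward conormal $\mu$ of $\partial\mathcal{C}_\theta$; $\ell(\xi)=\sin^2\theta+\cos\theta\langle\xi,e\rangle$. $\sigma_j(W)$ is the $j$-th elementary symmetric function of the eigenvalues of $W$ ($\sigma_0=1$); $\Gamma_k=\{\lambda\in\mathbb{R}^n:\sigma_i(\lambda)>0,1\le i\le k\}$; $h\in C^2(\mathcal{C}_\theta)$ is admissible if the eigenvalues of $\nabla^2h+h\sigma$ lie in $\Gamma_k$ everywhere. *)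

theory Defs
  imports "HOL-Analysis.Analysis"
begin

text \<open>Ambient space R^(n+1) is modelled as (real^'n) \<times> real, with n = CARD('n);
  the last factor is the coordinate x_(n+1).\<close>

type_synonym 'n pt = "(real^'n) \<times> real"

definition eN :: "('n::finite) pt" where
  "eN = (0, -1)"

definition cap :: "real \<Rightarrow> ('n::finite) pt set" where
  "cap \<theta> = {\<xi>. snd \<xi> \<ge> 0 \<and> norm (\<xi> - cos \<theta> *\<^sub>R eN) = 1}"

definition cap_boundary :: "real \<Rightarrow> ('n::finite) pt set" where
  "cap_boundary \<theta> = {\<xi> \<in> cap \<theta>. snd \<xi> = 0}"

definition ell :: "real \<Rightarrow> ('n::finite) pt \<Rightarrow> real" where
  "ell \<theta> \<xi> = (sin \<theta>)\<^sup>2 + cos \<theta> * (\<xi> \<bullet> eN)"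

definition cap_normal :: "real \<Rightarrow> ('n::finite) pt \<Rightarrow> ('n::finite) pt" where
  "cap_normal \<theta> \<xi> = \<xi> - cos \<theta> *\<^sub>R eN"

text \<open>Unit outward conormal of the boundary of the cap: the normalized tangential
  projection of e (pointing out of the half-space x_(n+1) \<ge> 0).\<close>
definition conormal :: "real \<Rightarrow> ('n::finite) pt \<Rightarrow> ('n::finite) pt" where
  "conormal \<theta> \<xi> =
     (let \<nu> = cap_normal \<theta> \<xi>; w = eN - (eN \<bullet> \<nu>) *\<^sub>R \<nu> in w /\<^sub>R norm w)"

text \<open>The bilinear form nabla^2 h + h sigma at a point of the sphere, computed from a
  C^2 extension h with gradient Dh and Hessian D2h (Gauss formula for the sphere).\<close>
definition Wform :: "real \<Rightarrow> (('n::finite) pt \<Rightarrow> real) \<Rightarrow> (('n::finite) pt \<Rightarrow> ('n::finite) pt) \<Rightarrow> (('n::finite) pt \<Rightarrow> ('n::finite) pt \<Rightarrow> ('n::finite) pt)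
                     \<Rightarrow> ('n::finite) pt \<Rightarrow> ('n::finite) pt \<Rightarrow> ('n::finite) pt \<Rightarrow> real" where
  "Wform \<theta> h Dh D2h \<xi> X Y =
     (D2h \<xi> X) \<bullet> Y - (Dh \<xi> \<bullet> cap_normal \<theta> \<xi>) * (X \<bullet> Y) + h \<xi> * (X \<bullet> Y)"

text \<open>lam (indexed by 'n, i.e. n values) are the eigenvalues (with multiplicity) of the form
  on the tangent space at \<xi>, w.r.t. the orthonormal eigenbasis b of that tangent space.\<close>
definition is_eigendecomp :: "real \<Rightarrow> (('n::finite) pt \<Rightarrow> real) \<Rightarrow> (('n::finite) pt \<Rightarrow> ('n::finite) pt) \<Rightarrow> (('n::finite) pt \<Rightarrow> ('n::finite) pt \<Rightarrow> ('n::finite) pt)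
                     \<Rightarrow> ('n::finite) pt \<Rightarrow> ('n \<Rightarrow> real) \<Rightarrow> ('n \<Rightarrow> ('n::finite) pt) \<Rightarrow> bool" where
  "is_eigendecomp \<theta> h Dh D2h \<xi> lam b \<longleftrightarrow>
     (\<forall>i j. b i \<bullet> b j = (if i = j then 1 else 0)) \<and>
     (\<forall>i. b i \<bullet> cap_normal \<theta> \<xi> = 0) \<and>
     (\<forall>i Y. Y \<bullet> cap_normal \<theta> \<xi> = 0 \<longrightarrow> Wform \<theta> h Dh D2h \<xi> (b i) Y = lam i * (b i \<bullet> Y))"

definition sigma :: "nat \<Rightarrow> ('n::finite \<Rightarrow> real) \<Rightarrow> real" where
  "sigma j lam = (\<Sum>S\<in>{S::'n set. card S = j}. \<Prod>i\<in>S. lam i)"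

definition Gamma :: "nat \<Rightarrow> ('n::finite \<Rightarrow> real) set" where
  "Gamma k = {lam. \<forall>i\<in>{1..k}. sigma i lam > 0}"

end

theory Submission
  imports Defs "HOL-Computational_Algebra.Polynomial"
begin

text \<open>
  The function \<open>ell\<close> is itself a solution: on the cap \<open>\<nabla>\<^sup>2ell + ell \<sigma> = \<sigma>\<close>, and \<open>ell\<close>
  satisfies the Robin condition \<open>\<nabla>\<^sub>\<mu>ell = cot \<theta> ell\<close>. Let \<open>a\<close> be the maximum of \<open>h / ell\<close>, attained
  at \<open>\<xi>\<^sub>0\<close>. Then \<open>h - a ell\<close> attains its maximum \<open>0\<close> at \<open>\<xi>\<^sub>0\<close>, and the first and second
  order conditions along great circles through \<open>\<xi>\<^sub>0\<close> give \<open>\<nabla>\<^sup>2h + h \<sigma> \<le> a \<sigma>\<close> there. At a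
  boundary point only the great circles entering the cap are available; the Robin condition,
  shared by \<open>h - a ell\<close>, supplies the missing tangential direction. So all eigenvalues at
  \<open>\<xi>\<^sub>0\<close> are at most \<open>a\<close>, and the Newton-Maclaurin inequalities bound the left-hand side of the
  equation by \<open>a\<^sup>k\<^sup>-\<^sup>l\<close> (after normalising \<open>\<sigma>\<^sub>j\<close> by \<open>n choose j\<close>), whence
  \<open>a\<^sup>p\<^sup>-\<^sup>1 \<le> a\<^sup>k\<^sup>-\<^sup>l\<close> and \<open>a \<le> 1\<close> because \<open>p - 1 > k - l\<close>. Symmetrically the minimum of
  \<open>h / ell\<close> is at least \<open>1\<close>, so \<open>h = ell\<close>.
\<close>

section \<open>Real-rooted polynomials and Newton's inequalities\<close>

definition real_rooted :: "real poly \<Rightarrow> bool" where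
  "real_rooted p \<longleftrightarrow> p \<noteq> 0 \<and> size (proots p) = degree p"

lemma real_rooted_decompose:
  fixes p :: "real poly"
  assumes "p \<noteq> 0" "size (proots p) = degree p"
  shows "p = smult (lead_coeff p) (\<Prod>x\<in>#proots p. [:-x,1:])"
  using assms
proof (induction "degree p" arbitrary: p)
  case 0
  then have "proots p = {#}" by auto
  moreover from 0 have "p = [:coeff p 0:]" by (metis degree_0_id)
  ultimately show ?case using 0 by simp
next
  case (Suc n)
  then obtain a where a: "a \<in># proots p" by (metis size_empty nat.distinct(1) multiset_nonemptyE)
  then have "poly p a = 0" using Suc by simp
  then obtain q where q: "p = [:-a,1:] * q" by (metis poly_eq_0_iff_dvd dvdE)
  have q0: "q \<noteq> 0" using Suc q by auto
  have "degree p = degree ([:-a,1:] :: real poly) + degree q"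
    using q q0 by (metis degree_mult_eq pCons_eq_0_iff one_neq_zero)
  then have dq: "degree q = n" using Suc(2) by simp
  have l: "proots ([:-a,1:]::real poly) = {#a#}" using proots_linear_factor[of "-a"] by simp
  have l0: "([:-a,1:]::real poly) \<noteq> 0" by simp
  have pr: "proots p = {#a#} + proots q"
    using proots_mult[OF l0 q0] l q by simp
  have "size (proots q) = degree q" using Suc(4) pr dq Suc(2) by simp
  then have "q = smult (lead_coeff q) (\<Prod>x\<in>#proots q. [:-x,1:])" using Suc(1) dq q0 by blast
  moreover have "lead_coeff p = lead_coeff q" unfolding q lead_coeff_mult by simp
  ultimately show ?case
    using q pr by (metis mult_smult_right prod_mset.insert add_mset_add_single add.commute)
qed

lemma prod_linear_factors_nonzero: "(\<Prod>x\<in>#B. [:-x,1:]) \<noteq> (0::real poly)"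
  by auto

lemma proots_prod_linear_factors: "proots (\<Prod>x\<in>#B. [:-x,1:]) = (B :: real multiset)"
proof (induction B)
  case (add x B)
  have "proots ([:-x,1:]::real poly) = {#x#}" using proots_linear_factor[of "-x"] by simp
  then show ?case
    using proots_mult[OF _ prod_linear_factors_nonzero, of "[:-x,1:]" B] add by simp
qed simp

lemma degree_prod_linear_factors: "degree (\<Prod>x\<in>#B. [:-x,1:]) = size (B :: real multiset)"
proof (induction B)
  case (add x B)
  show ?case
    using degree_mult_eq[OF _ prod_linear_factors_nonzero, of "[:-x,1:]" B] add by simp
qed simp

lemma real_rooted_smult_prod_linear_factors:
  "c \<noteq> 0 \<Longrightarrow> real_rooted (smult c (\<Prod>x\<in>#B. [:-x,1:]))"
  unfolding real_rooted_def
  by (auto simp: proots_prod_linear_factors degree_prod_linear_factors)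

text \<open>Rolle: between two consecutive roots of \<open>p\<close> lies a root of \<open>p'\<close>.\<close>

lemma pderiv_roots_between_roots:
  fixes p :: "real poly"
  assumes "finite R" "\<forall>x\<in>R. poly p x = 0"
  shows "\<exists>Z. finite Z \<and> card Z + 1 \<ge> card R \<and> Z \<inter> R = {} \<and> (\<forall>z\<in>Z. poly (pderiv p) z = 0)
             \<and> (\<forall>z\<in>Z. \<exists>a\<in>R. z < a)"
  using assms
proof (induction R rule: finite_linorder_max_induct)
  case empty
  then show ?case by (intro exI[of _ "{}"]) auto
next
  case (insert b A)
  show ?case
  proof (cases "A = {}")
    case True
    then show ?thesis by (intro exI[of _ "{}"]) auto
  next
    case False
    define M where "M = Max A"
    have MA: "M \<in> A" "\<forall>a\<in>A. a \<le> M" using False insert(1) M_def by auto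
    have Mb: "M < b" using MA insert(2) by auto
    obtain z where z: "M < z" "z < b" "poly p b - poly p M = (b - M) * poly (pderiv p) z"
      using poly_MVT[OF Mb] by blast
    have pz: "poly (pderiv p) z = 0" using z insert(4) MA Mb by auto
    obtain Z where Z: "finite Z" "card Z + 1 \<ge> card A" "Z \<inter> A = {}"
      "\<forall>z\<in>Z. poly (pderiv p) z = 0" "\<forall>z\<in>Z. \<exists>a\<in>A. z < a"
      using insert by auto
    have "z \<notin> Z" "b \<notin> Z" "z \<notin> A" using Z(5) MA Mb z(1) by force+
    then show ?thesis
      using Z z pz insert(1,2) by (intro exI[of _ "insert z Z"]) (auto simp: card_insert_if)
  qed
qed

lemma real_rooted_pderiv:
  assumes "real_rooted p" "degree p \<ge> 1"
  shows "real_rooted (pderiv p)"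
proof -
  have p0: "p \<noteq> 0" and sz: "size (proots p) = degree p"
    using assms unfolding real_rooted_def by auto
  define R where "R = set_mset (proots p)"
  have fR: "finite R" unfolding R_def by simp
  have Rroot: "\<forall>x\<in>R. poly p x = 0" unfolding R_def using p0 by simp
  obtain Z where Z: "finite Z" "card Z + 1 \<ge> card R" "Z \<inter> R = {}" "\<forall>z\<in>Z. poly (pderiv p) z = 0"
    using pderiv_roots_between_roots[OF fR Rroot] by blast
  have dp: "degree (pderiv p) = degree p - 1" by (rule degree_pderiv)
  have q0: "pderiv p \<noteq> 0"
    using assms(2) dp p0 by (metis One_nat_def degree_0 diff_is_0_eq le_antisym pderiv_eq_0_iff
        zero_neq_one le_numeral_extra(4))
  have ordR: "order x p = Suc (order x (pderiv p))" if "x \<in> R" for x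
    using order_pderiv[OF p0] Rroot that by blast
  have s1: "size (proots p) = (\<Sum>x\<in>R. order x p)"
    unfolding R_def using p0 by (simp add: size_multiset_overloaded_eq)
  have "(\<Sum>x\<in>R. order x p) = (\<Sum>x\<in>R. order x (pderiv p) + 1)" by (rule sum.cong) (auto simp: ordR)
  then have s2: "(\<Sum>x\<in>R. order x p) = (\<Sum>x\<in>R. order x (pderiv p)) + card R"
    by (simp add: sum_Suc)
  have s3: "card Z \<le> (\<Sum>x\<in>Z. order x (pderiv p))"
  proof -
    have "(\<Sum>x\<in>Z. (1::nat)) \<le> (\<Sum>x\<in>Z. order x (pderiv p))"
      by (rule sum_mono) (use Z(4) q0 in \<open>simp add: order_root Suc_le_eq\<close>)
    then show ?thesis by simp
  qed
  define S where "S = R \<union> Z \<union> set_mset (proots (pderiv p))"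
  have fS: "finite S" unfolding S_def using fR Z(1) by simp
  have "size (proots (pderiv p)) = (\<Sum>x\<in>set_mset (proots (pderiv p)). order x (pderiv p))"
    using q0 by (simp add: size_multiset_overloaded_eq)
  also have "\<dots> = (\<Sum>x\<in>S. order x (pderiv p))"
    by (rule sum.mono_neutral_left) (use fS q0 in \<open>auto simp: S_def order_root\<close>)
  also have "\<dots> \<ge> (\<Sum>x\<in>R \<union> Z. order x (pderiv p))"
    by (rule sum_mono2) (use fS in \<open>auto simp: S_def\<close>)
  also have "(\<Sum>x\<in>R \<union> Z. order x (pderiv p))
      = (\<Sum>x\<in>R. order x (pderiv p)) + (\<Sum>x\<in>Z. order x (pderiv p))"
    using Z(1,3) fR by (simp add: sum.union_disjoint Int_commute)
  finally have "size (proots (pderiv p)) \<ge> degree (pderiv p)"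
    using s1 s2 s3 sz dp Z(2) by linarith
  then show ?thesis
    using q0 size_proots_le le_antisym unfolding real_rooted_def by blast
qed

lemma real_rooted_higher_pderiv:
  assumes "real_rooted p" "m \<le> degree p"
  shows "real_rooted ((pderiv ^^ m) p)"
  using assms(2)
proof (induction m)
  case (Suc m)
  have "degree ((pderiv ^^ m) p) \<ge> 1" using Suc(2) by (simp add: degree_higher_pderiv)
  then show ?case using Suc real_rooted_pderiv by simp
qed (use assms(1) in simp)

lemma reflect_poly_prod_linear_factors:
  assumes "0 \<notin># (B :: real multiset)"
  shows "reflect_poly (\<Prod>x\<in>#B. [:-x,1:]) = smult (\<Prod>x\<in>#B. -x) (\<Prod>x\<in>#B. [:-1/x,1:])"
  using assms
proof (induction B)
  case (add x B)
  have x0: "x \<noteq> 0" using add by auto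
  have "reflect_poly ([:-x,1:]) = [:1,-x:]" using x0 by (simp add: reflect_poly_pCons)
  also have "[:1,-x:] = smult (-x) [:-1/x,1:]" using x0 by simp
  finally have r: "reflect_poly ([:-x,1:]) = smult (-x) [:-1/x,1:]" .
  have "reflect_poly (\<Prod>x\<in>#add_mset x B. [:-x,1:])
      = reflect_poly [:-x,1:] * reflect_poly (\<Prod>x\<in>#B. [:-x,1:])"
    by (simp only: image_mset_add_mset prod_mset.add_mset reflect_poly_mult)
  also have "\<dots> = smult (-x) [:-1/x,1:] * smult (\<Prod>x\<in>#B. -x) (\<Prod>x\<in>#B. [:-1/x,1:])"
    using r add by simp
  also have "\<dots> = smult (\<Prod>x\<in>#add_mset x B. -x) (\<Prod>x\<in>#add_mset x B. [:-1/x,1:])"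
    by (simp only: image_mset_add_mset prod_mset.add_mset mult_smult_left mult_smult_right
        smult_smult mult.commute)
  finally show ?case .
qed simp

lemma real_rooted_reflect_poly:
  assumes "real_rooted p" "coeff p 0 \<noteq> 0"
  shows "real_rooted (reflect_poly p)"
proof -
  have p0: "p \<noteq> 0" and sz: "size (proots p) = degree p"
    using assms unfolding real_rooted_def by auto
  have no0: "0 \<notin># proots p" using p0 assms(2) by (simp add: poly_0_coeff_0)
  then have nz: "lead_coeff p * (\<Prod>x\<in>#proots p. -x) \<noteq> 0"
    using p0 by (induction "proots p") auto
  have "reflect_poly p = smult (lead_coeff p * (\<Prod>x\<in>#proots p. -x))
      (\<Prod>x\<in>#image_mset (\<lambda>x. 1/x) (proots p). [:-x,1:])"
    using no0 by (subst real_rooted_decompose[OF p0 sz])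
      (simp add: reflect_poly_smult reflect_poly_prod_linear_factors image_mset.compositionality o_def)
  then show ?thesis using real_rooted_smult_prod_linear_factors[OF nz] by simp
qed

lemma real_rooted_quadratic_discriminant:
  assumes "real_rooted q" "degree q = 2"
  shows "4 * coeff q 0 * coeff q 2 \<le> (coeff q 1)^2"
proof -
  have q0: "q \<noteq> 0" and sz: "size (proots q) = degree q"
    using assms unfolding real_rooted_def by auto
  obtain r A where A: "proots q = add_mset r A"
    using sz assms(2) by (metis multiset_cases size_empty zero_neq_numeral)
  then have "size A = 1" using sz assms(2) by simp
  then obtain s where "A = {#s#}" using size_1_singleton_mset by blast
  then have q: "q = smult (lead_coeff q) ([:-r,1:] * [:-s,1:])"
    using real_rooted_decompose[OF q0 sz] A by simp
  define c where "c = lead_coeff q"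
  have "coeff q 0 = c * r * s" "coeff q 1 = - c * (r + s)" "coeff q 2 = c"
    by (subst q; simp add: c_def[symmetric] algebra_simps numeral_2_eq_2)+
  moreover have "(- c * (r + s))^2 - 4 * (c * r * s) * c = (c * (r - s))^2"
    by (simp add: power2_eq_square algebra_simps)
  ultimately show ?thesis by (smt (verit) zero_le_power2)
qed

lemma pochhammer_two: "pochhammer (2::real) k = fact (Suc k)"
  using pochhammer_rec[of "1::real" k] pochhammer_fact[of "Suc k", where 'a=real] by simp

lemma pochhammer_three: "pochhammer (3::real) k = fact (Suc (Suc k)) / 2"
  using pochhammer_rec[of "2::real" k] pochhammer_two[of "Suc k"] by simp

lemma coeff_higher_pderiv_0: "coeff ((pderiv ^^ m) f) 0 = fact m * coeff (f::real poly) m"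
  using coeff_higher_pderiv[of m f 0] by (simp add: pochhammer_fact)

lemma coeff_higher_pderiv_1: "coeff ((pderiv ^^ m) f) 1 = fact (Suc m) * coeff (f::real poly) (Suc m)"
  using coeff_higher_pderiv[of m f 1] by (simp add: pochhammer_two)

lemma coeff_higher_pderiv_2:
  "coeff ((pderiv ^^ m) f) 2 = fact (Suc (Suc m)) / 2 * coeff (f::real poly) (Suc (Suc m))"
  using coeff_higher_pderiv[of m f 2] by (simp add: pochhammer_three numeral_3_eq_3 numeral_2_eq_2)

lemma newton_inequality_bottom_coeffs:
  assumes "real_rooted q" "degree q = Suc (Suc m)"
  shows "2 * real (Suc (Suc m)) * coeff q 0 * coeff q 2 \<le> real (Suc m) * (coeff q 1)^2"
proof (cases "coeff q 0 = 0")
  case False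
  define r where "r = reflect_poly q"
  have "real_rooted r" unfolding r_def using real_rooted_reflect_poly[OF assms(1) False] .
  moreover have dr: "degree r = Suc (Suc m)" unfolding r_def using False assms(2) by simp
  ultimately have "4 * coeff ((pderiv ^^ m) r) 0 * coeff ((pderiv ^^ m) r) 2
      \<le> (coeff ((pderiv ^^ m) r) 1)^2"
    by (intro real_rooted_quadratic_discriminant real_rooted_higher_pderiv)
      (simp_all add: degree_higher_pderiv)
  moreover have "coeff ((pderiv ^^ m) r) 0 = fact m * coeff q 2"
    "coeff ((pderiv ^^ m) r) 1 = fact (Suc m) * coeff q 1"
    "coeff ((pderiv ^^ m) r) 2 = fact (Suc (Suc m)) / 2 * coeff q 0"
    unfolding coeff_higher_pderiv_0 coeff_higher_pderiv_1 coeff_higher_pderiv_2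
    unfolding r_def coeff_reflect_poly using assms(2) by simp_all
  moreover define F D D' where "F = (fact m :: real)" "D = real (Suc (Suc m))" "D' = real (Suc m)"
  ultimately have "4 * (F * coeff q 2) * (D * D' * F / 2 * coeff q 0) \<le> (D' * F * coeff q 1)^2"
    by (simp add: fact_Suc mult.assoc)
  then have "(D' * F * F) * (2 * D * coeff q 0 * coeff q 2) \<le> (D' * F * F) * (D' * (coeff q 1)^2)"
    by (simp add: power2_eq_square field_simps)
  moreover have "D' * F * F > 0" unfolding F_D_D'_def by simp
  ultimately show ?thesis unfolding F_D_D'_def by (simp add: mult_le_cancel_left_pos)
qed simp

lemma newton_inequality_real_rooted:
  assumes "real_rooted p" "degree p = N" "1 \<le> i" "i < N"
  shows "real (N - i + 1) * real (i + 1) * (coeff p (i - 1) * coeff p (i + 1))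
           \<le> real i * real (N - i) * (coeff p i)^2"
proof -
  obtain k where ik: "i = Suc k" using assms(3) by (cases i) auto
  obtain m where Nm: "N - k = Suc (Suc m)"
    using assms(4) ik by (intro that[of "N - Suc (Suc k)"]) simp
  define q where "q = (pderiv ^^ k) p"
  have qr: "real_rooted q" "degree q = Suc (Suc m)"
    unfolding q_def using assms Nm ik
      by (simp_all add: real_rooted_higher_pderiv degree_higher_pderiv)
  define F K1 K2 M1 M2 where "F = (fact k :: real)" "K1 = real (Suc k)" "K2 = real (Suc (Suc k))"
    "M1 = real (Suc m)" "M2 = real (Suc (Suc m))"
  from newton_inequality_bottom_coeffs[OF qr]
  have "2 * M2 * (F * coeff p k) * (K2 * K1 * F / 2 * coeff p (Suc (Suc k))) \<le> M1 * (K1 * F * coeff p (Suc k))^2"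
    unfolding q_def coeff_higher_pderiv_0 coeff_higher_pderiv_1 coeff_higher_pderiv_2 F_K1_K2_M1_M2_def
    by (simp add: fact_Suc mult.assoc)
  then have "(K1 * F * F) * (M2 * K2 * (coeff p k * coeff p (Suc (Suc k))))
      \<le> (K1 * F * F) * (K1 * M1 * (coeff p (Suc k))^2)"
    by (simp add: power2_eq_square field_simps)
  moreover have "K1 * F * F > 0" unfolding F_K1_K2_M1_M2_def by simp
  ultimately have "real (Suc (Suc m)) * real (Suc (Suc k)) * (coeff p k * coeff p (Suc (Suc k)))
      \<le> real (Suc k) * real (Suc m) * (coeff p (Suc k))^2"
    unfolding F_K1_K2_M1_M2_def by (simp add: mult_le_cancel_left_pos)
  moreover have "N - i + 1 = Suc (Suc m)" "N - i = Suc m" using Nm ik by simp_all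
  ultimately show ?thesis using ik by simp
qed

section \<open>Elementary symmetric functions\<close>

lemma prod_monom_same_degree:
  "finite J \<Longrightarrow> (\<Prod>i\<in>J. monom (c i) n) = monom (\<Prod>i\<in>J. c i) (n * card J)"
  by (induction J rule: finite_induct) (simp_all add: mult_monom)

lemma coeff_prod_one_plus_linear:
  "coeff (\<Prod>i\<in>UNIV. [:1, lam i:]) j = sigma j (lam :: 'n::finite \<Rightarrow> real)"
proof -
  have "[:1, a:] = monom a 1 + 1" for a :: real
    by (rule poly_eqI) (simp add: coeff_monom coeff_pCons split: nat.split)
  then have "(\<Prod>i\<in>UNIV. [:1, lam i:]) = (\<Sum>J\<in>Pow UNIV. monom (\<Prod>i\<in>J. lam i) (card J))"
    using prod_add[of UNIV "\<lambda>i. monom (lam i) 1" "\<lambda>_. 1"] by (simp add: prod_monom_same_degree)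
  then have "coeff (\<Prod>i\<in>UNIV. [:1, lam i:]) j = (\<Sum>J\<in>UNIV. if card J = j then \<Prod>i\<in>J. lam i else 0)"
    by (simp add: coeff_sum coeff_monom)
  then show ?thesis unfolding sigma_def by (simp add: sum.If_cases)
qed

lemma sigma_0: "sigma 0 (lam :: 'n::finite \<Rightarrow> real) = 1"
  unfolding sigma_def by (simp add: card_eq_0_iff)

lemma sigma_1: "sigma 1 (lam :: 'n::finite \<Rightarrow> real) = (\<Sum>i\<in>UNIV. lam i)"
proof -
  have "{S::'n set. card S = 1} = (\<lambda>i. {i}) ` UNIV" by (auto simp: card_1_singleton_iff)
  then show ?thesis unfolding sigma_def by (simp add: sum.reindex)
qed

definition sigma_poly :: "('n::finite \<Rightarrow> real) \<Rightarrow> real poly" where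
  "sigma_poly lam = (\<Prod>i\<in>UNIV. [:lam i, 1:])"

lemma sigma_poly_eq_prod_linear_factors:
  "sigma_poly lam = (\<Prod>x\<in>#image_mset (\<lambda>i. - lam i) (mset_set UNIV). [:-x,1:])"
  unfolding sigma_poly_def prod_unfold_prod_mset image_mset.compositionality o_def by simp

lemma real_rooted_sigma_poly: "real_rooted (sigma_poly lam)"
  using real_rooted_smult_prod_linear_factors[of 1]
    unfolding sigma_poly_eq_prod_linear_factors by simp

lemma degree_sigma_poly: "degree (sigma_poly (lam :: 'n::finite \<Rightarrow> real)) = CARD('n)"
  unfolding sigma_poly_eq_prod_linear_factors degree_prod_linear_factors by simp

lemma coeff_sigma_poly:
  assumes "j \<le> CARD('n)"
  shows "coeff (sigma_poly (lam :: 'n::finite \<Rightarrow> real)) (CARD('n) - j) = sigma j lam"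
proof -
  have "reflect_poly [:a, 1:] = [:1, a:]" for a :: real
    by (rule poly_eqI) (simp add: coeff_reflect_poly coeff_pCons split: nat.split)
  then have "reflect_poly (sigma_poly lam) = (\<Prod>i\<in>UNIV. [:1, lam i:])"
    unfolding sigma_poly_def reflect_poly_prod by simp
  then have "coeff (reflect_poly (sigma_poly lam)) j = sigma j lam"
    by (simp add: coeff_prod_one_plus_linear)
  then show ?thesis using assms by (simp add: coeff_reflect_poly degree_sigma_poly)
qed

lemma Suc_times_binomial_real:
  "real (Suc j) * real (n choose Suc j) = real (n - j) * real (n choose j)"
  by (metis binomial_absorption binomial_absorb_comp of_nat_mult)

definition sigma_mean :: "nat \<Rightarrow> ('n::finite \<Rightarrow> real) \<Rightarrow> real" where
  "sigma_mean j lam = sigma j lam / real (CARD('n) choose j)"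

lemma newton_inequality_sigma_mean:
  fixes lam :: "'n::finite \<Rightarrow> real"
  assumes "j + 2 \<le> CARD('n)"
  shows "sigma_mean (j+2) lam * sigma_mean j lam \<le> (sigma_mean (j+1) lam)^2"
proof -
  define n where "n = CARD('n)"
  define C0 C1 C2 where "C0 = real (n choose j)" "C1 = real (n choose (j+1))" "C2 = real (n choose (j+2))"
  define a b c where "a = sigma (j+2) lam" "b = sigma j lam" "c = sigma (j+1) lam"
  have pos: "C0 > 0" "C1 > 0" "C2 > 0" using assms unfolding C0_C1_C2_def n_def by auto
  have "coeff (sigma_poly lam) (n - (j + 1) - 1) = a" "coeff (sigma_poly lam) (n - (j + 1) + 1) = b"
    "coeff (sigma_poly lam) (n - (j + 1)) = c"
    using coeff_sigma_poly[of "j+2" lam] coeff_sigma_poly[of j lam] coeff_sigma_poly[of "j+1" lam] assms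
    unfolding a_b_c_def n_def by (simp_all add: Suc_diff_Suc)
  then have N: "real (j + 2) * real (n - j) * (a * b) \<le> real (j+1) * real (n - (j+1)) * c^2"
    using newton_inequality_real_rooted[OF real_rooted_sigma_poly degree_sigma_poly, of "n - (j+1)" lam]
      assms unfolding n_def by (simp add: mult.commute)
  have b1: "real (j+1) * C1 = real (n - j) * C0"
    unfolding C0_C1_C2_def using Suc_times_binomial_real[of j n] by simp
  have b2: "real (j+2) * C2 = real (n - (j+1)) * C1"
    unfolding C0_C1_C2_def using Suc_times_binomial_real[of "j+1" n] by simp
  have "(real (j + 2) * C2) * (real (n - j) * C0) * (a * b) \<le> real (j+1) * real (n - (j+1)) * c^2 * (C2 * C0)"
    using mult_right_mono[OF N, of "C2 * C0"] pos by (simp add: algebra_simps)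
  then have "(real (n - (j+1)) * real (j+1)) * (C1 * C1 * (a * b))
      \<le> (real (n - (j+1)) * real (j+1)) * (c^2 * (C2 * C0))"
    unfolding b2 b1[symmetric] by (simp add: algebra_simps)
  moreover have "real (n - (j+1)) * real (j+1) > 0" using assms unfolding n_def by simp
  ultimately have "C1 * C1 * (a * b) \<le> c^2 * (C2 * C0)" using mult_le_cancel_left_pos by blast
  then have "(a / C2) * (b / C0) \<le> (c / C1)^2" using pos by (simp add: field_simps power2_eq_square)
  then show ?thesis unfolding a_b_c_def C0_C1_C2_def n_def sigma_mean_def .
qed

lemma sigma_pos_of_pos:
  fixes lam :: "'n::finite \<Rightarrow> real"
  assumes "\<forall>i. lam i > 0" "j \<le> CARD('n)"
  shows "sigma j lam > 0"
proof -
  obtain S :: "'n set" where "card S = j"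
    using obtain_subset_with_card_n[of j UNIV] assms(2) by auto
  then have "{S::'n set. card S = j} \<noteq> {}" by auto
  then show ?thesis unfolding sigma_def
    by (intro sum_pos) (use assms(1) in \<open>auto intro: prod_pos\<close>)
qed

lemma sigma_mean_pos:
  assumes "\<forall>i\<in>{1..k}. sigma i lam > 0" "j \<le> k" "k \<le> CARD('n)"
  shows "sigma_mean j (lam :: 'n::finite \<Rightarrow> real) > 0"
  using assms sigma_0[of lam] unfolding sigma_mean_def by (cases "j = 0") auto

lemma sigma_mean_Suc_le:
  fixes lam :: "'n::finite \<Rightarrow> real"
  assumes "k \<le> CARD('n)" "\<forall>i\<in>{1..k}. sigma i lam > 0" "\<forall>i. lam i \<le> u" "j < k"
  shows "sigma_mean (Suc j) lam \<le> u * sigma_mean j lam"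
  using assms(4)
proof (induction j)
  case 0
  have "sigma 1 lam \<le> real CARD('n) * u"
    unfolding sigma_1 using assms(3) sum_bounded_above[of UNIV lam u] by simp
  then show ?case using assms(1) 0 by (simp add: sigma_mean_def sigma_0 field_simps)
next
  case (Suc j)
  note pos = sigma_mean_pos[OF assms(2) _ assms(1)]
  have "sigma_mean (j+2) lam * sigma_mean j lam \<le> sigma_mean (Suc j) lam * sigma_mean (Suc j) lam"
    using newton_inequality_sigma_mean[of j lam] Suc.prems assms(1) by (simp add: power2_eq_square)
  also have "\<dots> \<le> sigma_mean (Suc j) lam * (u * sigma_mean j lam)"
    using Suc pos[of "Suc j"] by (intro mult_left_mono) auto
  finally have "sigma_mean (j+2) lam * sigma_mean j lam \<le> (u * sigma_mean (Suc j) lam) * sigma_mean j lam"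
    by (simp add: algebra_simps)
  then show ?case using pos[of j] Suc.prems by (simp add: mult_le_cancel_right_pos)
qed

lemma sigma_mean_le_pow:
  fixes lam :: "'n::finite \<Rightarrow> real"
  assumes "k \<le> CARD('n)" "\<forall>i\<in>{1..k}. sigma i lam > 0" "\<forall>i. lam i \<le> u" "0 \<le> u" "l \<le> k"
  shows "sigma_mean k lam \<le> u^(k - l) * sigma_mean l lam"
  using assms(5)
proof (induction k rule: dec_induct)
  case (step m)
  have "sigma_mean (Suc m) lam \<le> u * sigma_mean m lam"
    using sigma_mean_Suc_le assms step by simp
  also have "\<dots> \<le> u * (u^(m - l) * sigma_mean l lam)"
    using step assms(4) by (intro mult_left_mono) auto
  finally show ?case using step by (simp add: Suc_diff_le)
qed simp

lemma card_Compl_finite: "card (- (S::'n::finite set)) = CARD('n) - card S"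
  unfolding Compl_eq_Diff_UNIV by (simp add: card_Diff_subset)

lemma sigma_reciprocal:
  fixes lam :: "'n::finite \<Rightarrow> real"
  assumes nz: "\<forall>i. lam i \<noteq> 0" and j: "j \<le> CARD('n)"
  shows "sigma j lam = (\<Prod>i\<in>UNIV. lam i) * sigma (CARD('n) - j) (\<lambda>i. 1 / lam i)"
proof -
  have bij: "bij_betw (\<lambda>S. - S) {S::'n set. card S = j} {T. card T = CARD('n) - j}"
  proof (rule bij_betwI[where g = "\<lambda>S. - S"])
    show "(\<lambda>S. - S) \<in> {S::'n set. card S = j} \<rightarrow> {T. card T = CARD('n) - j}"
      by (auto simp: card_Compl_finite)
    show "(\<lambda>S. - S) \<in> {T::'n set. card T = CARD('n) - j} \<rightarrow> {S. card S = j}"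
      using j by (auto simp: card_Compl_finite card_mono)
  qed auto
  have "sigma (CARD('n) - j) (\<lambda>i. 1 / lam i) = (\<Sum>S\<in>{S::'n set. card S = j}. \<Prod>i\<in>-S. 1 / lam i)"
    unfolding sigma_def using sum.reindex_bij_betw[OF bij, of "\<lambda>T. \<Prod>i\<in>T. 1 / lam i"] by simp
  then have "(\<Prod>i\<in>UNIV. lam i) * sigma (CARD('n) - j) (\<lambda>i. 1 / lam i)
      = (\<Sum>S\<in>{S::'n set. card S = j}. (\<Prod>i\<in>UNIV. lam i) * (\<Prod>i\<in>-S. 1 / lam i))"
    by (simp add: sum_distrib_left)
  also have "\<dots> = (\<Sum>S\<in>{S::'n set. card S = j}. \<Prod>i\<in>S. lam i)"
  proof (rule sum.cong[OF refl])
    fix S :: "'n set"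
    have "(\<Prod>i\<in>UNIV. lam i) = (\<Prod>i\<in>S. lam i) * (\<Prod>i\<in>-S. lam i)"
      using prod.union_disjoint[of S "-S" lam] by (simp add: Compl_partition)
    moreover have "(\<Prod>i\<in>-S. lam i) * (\<Prod>i\<in>-S. 1 / lam i) = 1"
      using nz by (simp add: prod.distrib[symmetric])
    ultimately show "(\<Prod>i\<in>UNIV. lam i) * (\<Prod>i\<in>-S. 1 / lam i) = (\<Prod>i\<in>S. lam i)"
      by (metis mult.assoc mult_1_right)
  qed
  finally show ?thesis unfolding sigma_def by simp
qed

lemma sigma_mean_reciprocal:
  fixes lam :: "'n::finite \<Rightarrow> real"
  assumes "\<forall>i. lam i \<noteq> 0" "j \<le> CARD('n)"
  shows "sigma_mean j lam = (\<Prod>i\<in>UNIV. lam i) * sigma_mean (CARD('n) - j) (\<lambda>i. 1 / lam i)"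
  using sigma_reciprocal[OF assms] assms(2) binomial_symmetric[OF assms(2)]
  unfolding sigma_mean_def by simp

lemma sigma_mean_ge_pow:
  fixes lam :: "'n::finite \<Rightarrow> real"
  assumes "k \<le> CARD('n)" "l \<le> k" "\<forall>i. u \<le> lam i" "0 < u"
  shows "u^(k - l) * sigma_mean l lam \<le> sigma_mean k lam"
proof -
  define n where "n = CARD('n)"
  define P where "P = (\<Prod>i\<in>UNIV. lam i)"
  have lpos: "\<forall>i. lam i > 0" using assms(3,4) by (meson less_le_trans)
  then have Ppos: "P > 0" unfolding P_def by (simp add: prod_pos)
  have "sigma_mean (n - l) (\<lambda>i. 1 / lam i) \<le> (1/u)^((n - l) - (n - k)) * sigma_mean (n - k) (\<lambda>i. 1 / lam i)"
  proof (rule sigma_mean_le_pow)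
    show "\<forall>j\<in>{1..n - l}. sigma j (\<lambda>i. 1 / lam i) > 0"
      using sigma_pos_of_pos[of "\<lambda>i. 1 / lam i"] lpos unfolding n_def by auto
    show "\<forall>i. 1 / lam i \<le> 1 / u" using assms(3,4) lpos by (simp add: frac_le)
  qed (use assms(4) assms(1,2) in \<open>auto simp: n_def\<close>)
  then have "P * sigma_mean (n - l) (\<lambda>i. 1 / lam i) \<le> (1/u)^(k - l) * (P * sigma_mean (n - k) (\<lambda>i. 1 / lam i))"
    using Ppos assms(1,2) unfolding n_def by (simp add: mult_left_mono algebra_simps)
  moreover have "\<forall>i. lam i \<noteq> 0" using lpos by (metis less_irrefl)
  ultimately have "sigma_mean l lam \<le> (1/u)^(k - l) * sigma_mean k lam"
    using sigma_mean_reciprocal[of lam l] sigma_mean_reciprocal[of lam k] assms(1,2)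
    unfolding P_def n_def by simp
  then have "u^(k - l) * sigma_mean l lam \<le> u^(k - l) * ((1/u)^(k - l) * sigma_mean k lam)"
    using assms(4) by (simp add: mult_left_mono)
  then show ?thesis using assms(4) by (simp add: power_one_over field_simps)
qed

lemma sigma_pos_of_Gamma: "lam \<in> Gamma k \<Longrightarrow> j \<le> k \<Longrightarrow> sigma j lam > 0"
  using sigma_0[of lam] unfolding Gamma_def by (cases "j = 0") auto

lemma sigma_mean_eq_of_sigma_quotient:
  fixes lam :: "'n::finite \<Rightarrow> real"
  assumes "lam \<in> Gamma k" "l < k" "k \<le> CARD('n)"
    and "sigma k lam / sigma l lam = real (CARD('n) choose k) / real (CARD('n) choose l) * c"
  shows "sigma_mean k lam = c * sigma_mean l lam"
  using assms sigma_pos_of_Gamma[OF assms(1), of l] unfolding sigma_mean_def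
    by (simp add: field_simps)

lemma le_one_of_sigma_mean_eq_powr:
  fixes lam :: "'n::finite \<Rightarrow> real"
  assumes "k \<le> CARD('n)" "l < k" "lam \<in> Gamma k" "\<forall>i. lam i \<le> r" "0 < r" "real (k - l) < q"
    and "sigma_mean k lam = r powr q * sigma_mean l lam"
  shows "r \<le> 1"
proof (rule ccontr)
  assume "\<not> r \<le> 1"
  then have "r powr real (k - l) < r powr q" using assms(6) by (simp add: powr_less_mono)
  moreover have "sigma_mean l lam > 0"
    using sigma_mean_pos[of k lam l] assms(1-3) unfolding Gamma_def by simp
  moreover have "sigma_mean k lam \<le> r^(k - l) * sigma_mean l lam"
    using sigma_mean_le_pow[of k lam r l] assms(1-5) unfolding Gamma_def by simp
  ultimately show False using assms(5,7) by (simp add: powr_realpow)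
qed

lemma ge_one_of_sigma_mean_eq_powr:
  fixes lam :: "'n::finite \<Rightarrow> real"
  assumes "k \<le> CARD('n)" "l < k" "\<forall>i. r \<le> lam i" "0 < r" "real (k - l) < q"
    and "sigma_mean k lam = r powr q * sigma_mean l lam"
  shows "1 \<le> r"
proof (rule ccontr)
  assume "\<not> 1 \<le> r"
  then have "r powr q < r powr real (k - l)" using assms(4,5) by (simp add: powr_less_mono')
  moreover have "\<forall>i. 0 < lam i" using assms(3,4) by (meson less_le_trans)
  then have "sigma_mean l lam > 0"
    using sigma_pos_of_pos[of lam l] assms(1,2) unfolding sigma_mean_def by simp
  moreover have "r^(k - l) * sigma_mean l lam \<le> sigma_mean k lam"
    using sigma_mean_ge_pow[of k l r lam] assms(1-4) by simp
  ultimately show False using assms(4,6) by (simp add: powr_realpow)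
qed

section \<open>Symmetry of second derivatives and the spectral theorem\<close>

lemma has_vector_derivative_comp_curve:
  fixes F :: "'a::real_normed_vector \<Rightarrow> 'b::real_normed_vector"
  assumes "(F has_derivative F') (at (g t))" "(g has_vector_derivative g') (at t)"
  shows "((\<lambda>t. F (g t)) has_vector_derivative F' g') (at t)"
proof -
  have c: "((\<lambda>t. F (g t)) has_derivative (\<lambda>s. F' (s *\<^sub>R g'))) (at t)"
    using has_derivative_compose[OF assms(2)[unfolded has_vector_derivative_def] assms(1)]
      by (simp add: o_def)
  have lin: "linear F'" using has_derivative_linear[OF assms(1)] .
  have eq: "(\<lambda>s. F' (s *\<^sub>R g')) = (\<lambda>s. s *\<^sub>R F' g')"
    by (rule ext) (simp add: linear_scale[OF lin])
  show ?thesis using c unfolding has_vector_derivative_def eq .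
qed

lemma has_real_derivative_along_line:
  fixes F :: "'a::real_normed_vector \<Rightarrow> real"
  assumes "(F has_derivative F') (at (p + s *\<^sub>R v))"
  shows "((\<lambda>s. F (p + s *\<^sub>R v)) has_real_derivative F' v) (at s)"
  unfolding has_real_derivative_iff_has_vector_derivative
  by (rule has_vector_derivative_comp_curve[where g = "\<lambda>s. p + s *\<^sub>R v", OF assms])
    (auto intro!: derivative_eq_intros simp: has_vector_derivative_def)

lemma second_difference_mvt:
  fixes h :: "'a::euclidean_space \<Rightarrow> real"
  assumes D1: "\<forall>y\<in>ball x r. (h has_derivative (\<lambda>u. Dh y \<bullet> u)) (at y)"
    and D2: "\<forall>y\<in>ball x r. (Dh has_derivative D2h y) (at y)"
    and t: "0 < t" "t * (norm v + norm w) < r"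
  shows "\<exists>\<sigma> \<tau>. 0 < \<sigma> \<and> \<sigma> < t \<and> 0 < \<tau> \<and> \<tau> < t \<and>
     h (x + t *\<^sub>R v + t *\<^sub>R w) - h (x + t *\<^sub>R v) - h (x + t *\<^sub>R w) + h x
       = t * t * (D2h (x + \<sigma> *\<^sub>R v + \<tau> *\<^sub>R w) w \<bullet> v)"
proof -
  have inb: "x + a *\<^sub>R v + b *\<^sub>R w \<in> ball x r" if "0 \<le> a" "a \<le> t" "0 \<le> b" "b \<le> t" for a b
  proof -
    have "norm (a *\<^sub>R v + b *\<^sub>R w) \<le> norm (a *\<^sub>R v) + norm (b *\<^sub>R w)" by (rule norm_triangle_ineq)
    also have "\<dots> = a * norm v + b * norm w" using that by simp
    finally have "norm (a *\<^sub>R v + b *\<^sub>R w) \<le> a * norm v + b * norm w" .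
    also have "\<dots> \<le> t * norm v + t * norm w" using that by (intro add_mono mult_right_mono) auto
    finally have "norm (a *\<^sub>R v + b *\<^sub>R w) < r" using t by (simp add: algebra_simps)
    moreover have "x - (x + a *\<^sub>R v + b *\<^sub>R w) = - (a *\<^sub>R v + b *\<^sub>R w)" by (simp add: algebra_simps)
    ultimately show ?thesis by (simp only: mem_ball dist_norm norm_minus_cancel)
  qed
  define phi where "phi s = h (x + t *\<^sub>R w + s *\<^sub>R v) - h (x + s *\<^sub>R v)" for s
  have dphi: "DERIV phi s :> Dh (x + t *\<^sub>R w + s *\<^sub>R v) \<bullet> v - Dh (x + s *\<^sub>R v) \<bullet> v"
    if "0 \<le> s" "s \<le> t" for s
  proof -
    have "x + t *\<^sub>R w + s *\<^sub>R v \<in> ball x r" "x + s *\<^sub>R v \<in> ball x r"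
      using inb[of s t] inb[of s 0] that t by (simp_all add: algebra_simps)
    then show ?thesis unfolding phi_def using D1
      by (intro DERIV_diff has_real_derivative_along_line[where F=h and F'="\<lambda>u. Dh _ \<bullet> u"]) auto
  qed
  obtain \<sigma> where s: "0 < \<sigma>" "\<sigma> < t"
    "phi t - phi 0 = t * (Dh (x + t *\<^sub>R w + \<sigma> *\<^sub>R v) \<bullet> v - Dh (x + \<sigma> *\<^sub>R v) \<bullet> v)"
    using MVT2[OF t(1) dphi] by auto
  define psi where "psi r' = Dh (x + \<sigma> *\<^sub>R v + r' *\<^sub>R w) \<bullet> v" for r'
  have dpsi: "DERIV psi r' :> D2h (x + \<sigma> *\<^sub>R v + r' *\<^sub>R w) w \<bullet> v" if "0 \<le> r'" "r' \<le> t" for r'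
  proof -
    have "x + \<sigma> *\<^sub>R v + r' *\<^sub>R w \<in> ball x r" using inb[of \<sigma> r'] that s by simp
    then have "((\<lambda>y. Dh y \<bullet> v) has_derivative (\<lambda>u. D2h (x + \<sigma> *\<^sub>R v + r' *\<^sub>R w) u \<bullet> v))
        (at (x + \<sigma> *\<^sub>R v + r' *\<^sub>R w))"
      using D2 by (auto intro: has_derivative_inner_left)
    then show ?thesis unfolding psi_def by (rule has_real_derivative_along_line)
  qed
  obtain \<tau> where tau: "0 < \<tau>" "\<tau> < t"
    "psi t - psi 0 = t * (D2h (x + \<sigma> *\<^sub>R v + \<tau> *\<^sub>R w) w \<bullet> v)"
    using MVT2[OF t(1) dpsi] by auto
  have "h (x + t *\<^sub>R v + t *\<^sub>R w) - h (x + t *\<^sub>R v) - h (x + t *\<^sub>R w) + h x = phi t - phi 0"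
    unfolding phi_def by (simp add: algebra_simps)
  also have "\<dots> = t * (psi t - psi 0)" using s(3) unfolding psi_def by (simp add: algebra_simps)
  also have "\<dots> = t * t * (D2h (x + \<sigma> *\<^sub>R v + \<tau> *\<^sub>R w) w \<bullet> v)" using tau(3) by simp
  finally show ?thesis using s tau by blast
qed

lemma mixed_second_derivatives_agree_nearby:
  fixes h :: "'a::euclidean_space \<Rightarrow> real"
  assumes D1: "\<forall>y\<in>ball x r. (h has_derivative (\<lambda>u. Dh y \<bullet> u)) (at y)"
    and D2: "\<forall>y\<in>ball x r. (Dh has_derivative D2h y) (at y)"
    and \<delta>: "0 < \<delta>" "\<delta> \<le> r"
  obtains y1 y2 where "dist y1 x < \<delta>" "dist y2 x < \<delta>" "D2h y1 w \<bullet> v = D2h y2 v \<bullet> w"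
proof -
  define t where "t = \<delta> / (2 * (norm v + norm w + 1))"
  have pos: "norm v + norm w + 1 > 0" by (simp add: add_nonneg_pos)
  have t: "t > 0" "t * (norm v + norm w) < \<delta>"
  proof -
    show "t > 0" unfolding t_def using \<delta> pos by simp
    have "t * (norm v + norm w) < t * (2 * (norm v + norm w + 1))"
      using \<open>t > 0\<close> pos by (intro mult_strict_left_mono) auto
    also have "\<dots> = \<delta>" unfolding t_def using pos by simp
    finally show "t * (norm v + norm w) < \<delta>" .
  qed
  have near: "dist (x + a *\<^sub>R p + b *\<^sub>R q) x < \<delta>"
    if "norm p + norm q = norm v + norm w" "0 < a" "a < t" "0 < b" "b < t" for a b p q
  proof -
    have "norm (a *\<^sub>R p + b *\<^sub>R q) \<le> a * norm p + b * norm q"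
      using norm_triangle_ineq[of "a *\<^sub>R p" "b *\<^sub>R q"] that by simp
    also have "\<dots> \<le> t * norm p + t * norm q" using that by (intro add_mono mult_right_mono) auto
    also have "\<dots> = t * (norm v + norm w)" using that(1) by (metis distrib_left)
    finally show ?thesis using that(1) t(2) by (simp add: algebra_simps dist_norm)
  qed
  have tr: "t * (norm v + norm w) < r" using t(2) \<delta>(2) by linarith
  obtain \<sigma> \<tau> where st: "0 < \<sigma>" "\<sigma> < t" "0 < \<tau>" "\<tau> < t"
    "h (x + t *\<^sub>R v + t *\<^sub>R w) - h (x + t *\<^sub>R v) - h (x + t *\<^sub>R w) + h x
       = t * t * (D2h (x + \<sigma> *\<^sub>R v + \<tau> *\<^sub>R w) w \<bullet> v)"
    using second_difference_mvt[OF D1 D2 t(1) tr] by blast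
  obtain \<sigma>' \<tau>' where st': "0 < \<sigma>'" "\<sigma>' < t" "0 < \<tau>'" "\<tau>' < t"
    "h (x + t *\<^sub>R w + t *\<^sub>R v) - h (x + t *\<^sub>R w) - h (x + t *\<^sub>R v) + h x
       = t * t * (D2h (x + \<sigma>' *\<^sub>R w + \<tau>' *\<^sub>R v) v \<bullet> w)"
    using second_difference_mvt[OF D1 D2 t(1), of w v] tr
      by (simp only: add.commute[of "norm w"]) blast
  have "t * t * (D2h (x + \<sigma> *\<^sub>R v + \<tau> *\<^sub>R w) w \<bullet> v) = t * t * (D2h (x + \<sigma>' *\<^sub>R w + \<tau>' *\<^sub>R v) v \<bullet> w)"
    using st(5) st'(5) by (simp add: algebra_simps)
  then have "D2h (x + \<sigma> *\<^sub>R v + \<tau> *\<^sub>R w) w \<bullet> v = D2h (x + \<sigma>' *\<^sub>R w + \<tau>' *\<^sub>R v) v \<bullet> w"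
    using t(1) by simp
  moreover have "dist (x + \<sigma> *\<^sub>R v + \<tau> *\<^sub>R w) x < \<delta>" "dist (x + \<sigma>' *\<^sub>R w + \<tau>' *\<^sub>R v) x < \<delta>"
    using near[of v w \<sigma> \<tau>] near[of w v \<sigma>' \<tau>'] st st' by (simp_all add: add.commute)
  ultimately show ?thesis using that by blast
qed

lemma second_derivative_symmetric:
  fixes h :: "'a::euclidean_space \<Rightarrow> real"
  assumes U: "open U"
    and D1: "\<forall>x\<in>U. (h has_derivative (\<lambda>v. Dh x \<bullet> v)) (at x)"
    and D2: "\<forall>x\<in>U. (Dh has_derivative D2h x) (at x)"
    and D2c: "\<forall>v. continuous_on U (\<lambda>x. D2h x v)"
    and x: "x \<in> U"
  shows "D2h x v \<bullet> w = D2h x w \<bullet> v"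
proof (rule ccontr)
  assume ne: "D2h x v \<bullet> w \<noteq> D2h x w \<bullet> v"
  obtain r where r: "r > 0" "ball x r \<subseteq> U" using U x open_contains_ball by blast
  define F1 where "F1 y = D2h y w \<bullet> v" for y
  define F2 where "F2 y = D2h y v \<bullet> w" for y
  have "isCont F1 x" unfolding F1_def
    using D2c U x continuous_on_eq_continuous_at[of U "\<lambda>y. D2h y w \<bullet> v"]
    by (auto intro: continuous_on_inner continuous_on_const)
  moreover have "isCont F2 x" unfolding F2_def
    using D2c U x continuous_on_eq_continuous_at[of U "\<lambda>y. D2h y v \<bullet> w"]
    by (auto intro: continuous_on_inner continuous_on_const)
  moreover define e where "e = \<bar>F1 x - F2 x\<bar> / 2"
  moreover have e: "e > 0" using ne unfolding e_def F1_def F2_def by (simp add: inner_commute)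
  ultimately obtain d1 d2 where d: "d1 > 0" "\<forall>y. dist y x < d1 \<longrightarrow> dist (F1 y) (F1 x) < e"
    "d2 > 0" "\<forall>y. dist y x < d2 \<longrightarrow> dist (F2 y) (F2 x) < e"
    unfolding continuous_at_eps_delta by blast
  have "\<forall>y\<in>ball x r. (h has_derivative (\<lambda>u. Dh y \<bullet> u)) (at y)"
    "\<forall>y\<in>ball x r. (Dh has_derivative D2h y) (at y)" using D1 D2 r(2) by blast+
  moreover have "0 < min r (min d1 d2)" "min r (min d1 d2) \<le> r" using r(1) d(1,3) by auto
  ultimately obtain y1 y2 where "dist y1 x < min r (min d1 d2)" "dist y2 x < min r (min d1 d2)"
    "F1 y1 = F2 y2"
    unfolding F1_def F2_def by (rule mixed_second_derivatives_agree_nearby)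
  then have "\<bar>F1 y1 - F1 x\<bar> < e" "\<bar>F2 y2 - F2 x\<bar> < e" "F1 y1 = F2 y2"
    using d(2)[rule_format, of y1] d(4)[rule_format, of y2] by (simp_all add: dist_real_def)
  moreover have "False" if "\<bar>p - a\<bar> < \<bar>a - b\<bar> / 2" "\<bar>q - b\<bar> < \<bar>a - b\<bar> / 2" "p = q"
    for p q a b :: real
    using that by (simp add: abs_if split: if_split_asm)
  ultimately show False unfolding e_def by blast
qed

lemma linear_coeff_zero_if_quadratic_nonpos:
  fixes a c :: real
  assumes "\<forall>t. 2 * t * a + t^2 * c \<le> 0"
  shows "a = 0"
proof -
  define d where "d = \<bar>c\<bar> + 1"
  have d: "d > 0" unfolding d_def by simp
  have "2 * (a / d) * a + (a / d)^2 * c \<le> 0" using assms by blast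
  then have "(2 * (a / d) * a + (a / d)^2 * c) * d^2 \<le> 0" using d by (simp add: mult_nonpos_nonneg)
  moreover have "(2 * (a / d) * a + (a / d)^2 * c) * d^2 = a^2 * (2 * d + c)" using d
    by (simp add: field_simps power2_eq_square)
  ultimately have "a^2 * (2 * d + c) \<le> 0" by simp
  moreover have "2 * d + c > 0" unfolding d_def by (simp add: abs_if)
  ultimately have "a^2 \<le> 0" by (simp add: mult_le_0_iff)
  then show ?thesis by simp
qed

lemma rayleigh_quotient_attains_max:
  fixes A :: "'a::euclidean_space \<Rightarrow> 'a"
  assumes lin: "linear A" and subS: "subspace S" and dimS: "dim S \<noteq> 0"
  obtains x0 where "x0 \<in> S" "norm x0 = 1" "\<forall>z\<in>S. A z \<bullet> z \<le> (A x0 \<bullet> x0) * (z \<bullet> z)"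
proof -
  have "\<not> S \<subseteq> {0}" using dimS dim_eq_0 by metis
  then obtain x where x: "x \<in> S" "x \<noteq> 0" by auto
  define K where "K = S \<inter> sphere 0 1"
  have cK: "compact K" unfolding K_def using closed_subspace[OF subS] compact_sphere
    by (metis compact_Int_closed inf_commute)
  have "x /\<^sub>R norm x \<in> K" unfolding K_def using x subS by (simp add: subspace_scale)
  then have neK: "K \<noteq> {}" by auto
  have "continuous_on K (\<lambda>y. A y \<bullet> y)" using lin linear_conv_bounded_linear
    by (intro continuous_on_inner linear_continuous_on continuous_on_id) blast
  then obtain x0 where x0: "x0 \<in> K" "\<forall>y\<in>K. A y \<bullet> y \<le> A x0 \<bullet> x0"
    using continuous_attains_sup[OF cK neK] by blast
  have "A z \<bullet> z \<le> (A x0 \<bullet> x0) * (z \<bullet> z)" if "z \<in> S" for z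
  proof (cases "z = 0")
    case True then show ?thesis using linear_0[OF lin] by simp
  next
    case False
    have "z /\<^sub>R norm z \<in> K" unfolding K_def using that False subS by (simp add: subspace_scale)
    then have "A (z /\<^sub>R norm z) \<bullet> (z /\<^sub>R norm z) \<le> A x0 \<bullet> x0" using x0 by blast
    then have "(A z \<bullet> z) / (norm z)^2 \<le> A x0 \<bullet> x0"
      by (simp add: linear_scale[OF lin] power2_eq_square divide_inverse mult.commute mult.left_commute)
    then show ?thesis using False by (simp add: field_simps power2_norm_eq_inner)
  qed
  then show ?thesis using that x0(1) unfolding K_def by auto
qed

lemma self_adjoint_unit_eigenvector:
  fixes A :: "'a::euclidean_space \<Rightarrow> 'a"
  assumes lin: "linear A" and sym: "\<forall>x y. A x \<bullet> y = A y \<bullet> x"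
    and subS: "subspace S" and dimS: "dim S \<noteq> 0"
  obtains x0 where "x0 \<in> S" "norm x0 = 1" "\<forall>y\<in>S. x0 \<bullet> y = 0 \<longrightarrow> A x0 \<bullet> y = 0"
proof -
  obtain x0 where x0S: "x0 \<in> S" and nx0: "norm x0 = 1"
    and bound: "\<forall>z\<in>S. A z \<bullet> z \<le> (A x0 \<bullet> x0) * (z \<bullet> z)"
    using rayleigh_quotient_attains_max[OF lin subS dimS] by blast
  have x0x0: "x0 \<bullet> x0 = 1" using nx0 by (simp add: dot_square_norm)
  have "A x0 \<bullet> y = 0" if "y \<in> S" "x0 \<bullet> y = 0" for y
  proof -
    text \<open>The Rayleigh quotient is stationary at its maximum \<open>x0\<close> along \<open>x0 + t y\<close>.\<close>
    have "2 * t * (A x0 \<bullet> y) + t^2 * (A y \<bullet> y - (A x0 \<bullet> x0) * (y \<bullet> y)) \<le> 0" for t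
    proof -
      have "x0 + t *\<^sub>R y \<in> S" using that x0S subS by (simp add: subspace_add subspace_scale)
      moreover have "A (x0 + t *\<^sub>R y) \<bullet> (x0 + t *\<^sub>R y) = A x0 \<bullet> x0 + 2 * t * (A x0 \<bullet> y) + t^2 * (A y \<bullet> y)"
        using sym by (simp add: linear_add[OF lin] linear_scale[OF lin] inner_add_left inner_add_right
            power2_eq_square algebra_simps)
      moreover have "(x0 + t *\<^sub>R y) \<bullet> (x0 + t *\<^sub>R y) = 1 + t^2 * (y \<bullet> y)"
        using x0x0 that(2)
          by (simp add: inner_add_left inner_add_right inner_commute power2_eq_square)
      ultimately show ?thesis using bound by (force simp: algebra_simps)
    qed
    then show ?thesis using linear_coeff_zero_if_quadratic_nonpos by blast
  qed
  then show ?thesis using that x0S nx0 by blast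
qed

lemma dim_orthogonal_in_subspace:
  fixes S :: "'a::euclidean_space set"
  assumes subS: "subspace S" and x0S: "x0 \<in> S" and x0: "x0 \<noteq> 0"
  shows "dim {y \<in> S. x0 \<bullet> y = 0} = dim S - 1"
proof -
  define S' where "S' = {y \<in> S. x0 \<bullet> y = 0}"
  have sp: "subspace (span {x0})" by simp
  have "span {x0} \<subseteq> S" using x0S subS by (simp add: span_minimal)
  then have "dim {y \<in> S. \<forall>x\<in>span {x0}. orthogonal x y} + dim (span {x0}) = dim S"
    using dim_subspace_orthogonal_to_vectors[OF sp subS] by blast
  moreover have "{y \<in> S. \<forall>x\<in>span {x0}. orthogonal x y} = S'"
  proof
    show "{y \<in> S. \<forall>x\<in>span {x0}. orthogonal x y} \<subseteq> S'"
      unfolding S'_def orthogonal_def by (auto intro: span_base)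
    show "S' \<subseteq> {y \<in> S. \<forall>x\<in>span {x0}. orthogonal x y}"
      unfolding S'_def orthogonal_def by (auto simp: span_singleton)
  qed
  moreover have "dim (span {x0}) = 1" using x0 by (auto simp: dim_insert)
  ultimately show ?thesis unfolding S'_def by simp
qed

lemma self_adjoint_orthonormal_eigenbasis:
  fixes A :: "'a::euclidean_space \<Rightarrow> 'a"
  assumes lin: "linear A" and sym: "\<forall>x y. A x \<bullet> y = A y \<bullet> x"
  shows "subspace S \<Longrightarrow> \<exists>B. B \<subseteq> S \<and> finite B \<and> card B = dim S \<and> (\<forall>b\<in>B. norm b = 1) \<and>
     (\<forall>b\<in>B. \<forall>c\<in>B. b \<noteq> c \<longrightarrow> b \<bullet> c = 0) \<and> (\<forall>b\<in>B. \<forall>y\<in>S. A b \<bullet> y = (A b \<bullet> b) * (b \<bullet> y))"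
proof (induction "dim S" arbitrary: S)
  case 0
  then show ?case by (intro exI[of _ "{}"]) auto
next
  case (Suc m S)
  note subS = Suc.prems
  obtain x0 where x0S: "x0 \<in> S" and nx0: "norm x0 = 1"
    and orth: "\<forall>y\<in>S. x0 \<bullet> y = 0 \<longrightarrow> A x0 \<bullet> y = 0"
    using self_adjoint_unit_eigenvector[OF lin sym subS] Suc.hyps(2) by (metis nat.distinct(1))
  have x0x0: "x0 \<bullet> x0 = 1" using nx0 by (simp add: dot_square_norm)
  define S' where "S' = {y \<in> S. x0 \<bullet> y = 0}"
  have subS': "subspace S'" unfolding S'_def
    using subspace_inter[OF subS subspace_hyperplane[of x0]] by (simp add: Int_def)
  have dimS': "dim S' = m"
  proof -
    have "x0 \<noteq> 0" using nx0 by auto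
    then show ?thesis
      unfolding S'_def using dim_orthogonal_in_subspace[OF subS x0S] Suc.hyps(2) by simp
  qed
  obtain B' where B': "B' \<subseteq> S'" "finite B'" "card B' = dim S'" "\<forall>b\<in>B'. norm b = 1"
     "\<forall>b\<in>B'. \<forall>c\<in>B'. b \<noteq> c \<longrightarrow> b \<bullet> c = 0" "\<forall>b\<in>B'. \<forall>y\<in>S'. A b \<bullet> y = (A b \<bullet> b) * (b \<bullet> y)"
    using Suc.hyps(1)[OF dimS'[symmetric] subS'] by blast
  have x0B': "x0 \<notin> B'" using B'(1) x0x0 unfolding S'_def by auto
  have decomp: "y - (x0 \<bullet> y) *\<^sub>R x0 \<in> S'" if "y \<in> S" for y
    unfolding S'_def using that x0S subS x0x0
    by (simp add: subspace_diff subspace_scale inner_diff_right)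
  show ?case
  proof (intro exI[of _ "insert x0 B'"] conjI)
    show "insert x0 B' \<subseteq> S" using x0S B'(1) unfolding S'_def by auto
    show "finite (insert x0 B')" using B'(2) by simp
    show "card (insert x0 B') = dim S" using B'(2,3) x0B' dimS' Suc.hyps(2) by simp
    show "\<forall>b\<in>insert x0 B'. norm b = 1" using B'(4) nx0 by simp
    show "\<forall>b\<in>insert x0 B'. \<forall>c\<in>insert x0 B'. b \<noteq> c \<longrightarrow> b \<bullet> c = 0"
      using B'(1,5) unfolding S'_def by (auto simp: inner_commute)
    show "\<forall>b\<in>insert x0 B'. \<forall>y\<in>S. A b \<bullet> y = (A b \<bullet> b) * (b \<bullet> y)"
    proof (intro ballI)
      fix b y assume b: "b \<in> insert x0 B'" and y: "y \<in> S"
      define y' where "y' = y - (x0 \<bullet> y) *\<^sub>R x0"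
      have y': "y' \<in> S'" unfolding y'_def using decomp[OF y] .
      have "A b \<bullet> y' = (A b \<bullet> b) * (b \<bullet> y') \<and> A b \<bullet> x0 = (A b \<bullet> b) * (b \<bullet> x0)"
      proof (cases "b = x0")
        case True then show ?thesis using orth y' x0x0 unfolding S'_def by simp
      next
        case False
        then have bB: "b \<in> B'" and "b \<in> S" "x0 \<bullet> b = 0" using b B'(1) unfolding S'_def by auto
        then have "A b \<bullet> x0 = 0" "b \<bullet> x0 = 0" using sym orth by (metis inner_commute)+
        moreover have "A b \<bullet> y' = (A b \<bullet> b) * (b \<bullet> y')" using B'(6) bB y' by blast
        ultimately show ?thesis by simp
      qed
      moreover have "y = (x0 \<bullet> y) *\<^sub>R x0 + y'" unfolding y'_def by simp
      then have "A b \<bullet> y = (x0 \<bullet> y) * (A b \<bullet> x0) + A b \<bullet> y'"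
        "b \<bullet> y = (x0 \<bullet> y) * (b \<bullet> x0) + b \<bullet> y'"
        by (metis inner_add_right inner_scaleR_right)+
      ultimately show "A b \<bullet> y = (A b \<bullet> b) * (b \<bullet> y)" by (simp add: algebra_simps)
    qed
  qed
qed

lemma self_adjoint_indexed_eigenbasis:
  fixes A :: "'a::euclidean_space \<Rightarrow> 'a"
  assumes lin: "linear A" and sym: "\<forall>x y. A x \<bullet> y = A y \<bullet> x"
    and T: "subspace T" "dim T = CARD('i)"
  obtains f :: "'i::finite \<Rightarrow> 'a" where "\<forall>i j. f i \<bullet> f j = (if i = j then 1 else 0)" "\<forall>i. f i \<in> T"
    "\<forall>i. \<forall>y\<in>T. A (f i) \<bullet> y = (A (f i) \<bullet> f i) * (f i \<bullet> y)"
proof -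
  obtain B where B: "B \<subseteq> T" "finite B" "card B = dim T" "\<forall>b\<in>B. norm b = 1"
     "\<forall>b\<in>B. \<forall>c\<in>B. b \<noteq> c \<longrightarrow> b \<bullet> c = 0" "\<forall>b\<in>B. \<forall>y\<in>T. A b \<bullet> y = (A b \<bullet> b) * (b \<bullet> y)"
    using self_adjoint_orthonormal_eigenbasis[OF lin sym T(1)] by blast
  obtain f where f: "bij_betw f (UNIV :: 'i set) B"
    using finite_same_card_bij[of "UNIV :: 'i set" B] B(2,3) T(2) by auto
  then have fB: "f i \<in> B" and finj: "f i = f j \<longleftrightarrow> i = j" for i j
    unfolding bij_betw_def inj_on_def by auto
  have "f i \<bullet> f j = (if i = j then 1 else 0)" for i j
    using B(4,5) fB finj by (auto simp: dot_square_norm)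
  then show ?thesis using that B(1,6) fB by blast
qed

lemma eigendecomp_exists:
  fixes h :: "(real^'n::finite) \<times> real \<Rightarrow> real"
    and Dh :: "(real^'n) \<times> real \<Rightarrow> (real^'n) \<times> real"
    and D2h :: "(real^'n) \<times> real \<Rightarrow> (real^'n) \<times> real \<Rightarrow> (real^'n) \<times> real"
  assumes U: "open U"
    and D1: "\<forall>x\<in>U. (h has_derivative (\<lambda>v. Dh x \<bullet> v)) (at x)"
    and D2: "\<forall>x\<in>U. (Dh has_derivative D2h x) (at x)"
    and D2c: "\<forall>v. continuous_on U (\<lambda>x. D2h x v)"
    and xi: "\<xi> \<in> U" and nz: "cap_normal \<theta> \<xi> \<noteq> 0"
  shows "\<exists>lam b. is_eigendecomp \<theta> h Dh D2h \<xi> lam b"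
proof -
  define \<nu> where "\<nu> = cap_normal \<theta> \<xi>"
  define A where "A x = D2h \<xi> x + (h \<xi> - Dh \<xi> \<bullet> \<nu>) *\<^sub>R x" for x
  have linD: "linear (D2h \<xi>)" using D2 xi has_derivative_linear by blast
  have lin: "linear A" unfolding A_def
    by (intro linearI) (auto simp: linear_add[OF linD] linear_scale[OF linD] algebra_simps)
  have sym: "\<forall>x y. A x \<bullet> y = A y \<bullet> x"
  proof (intro allI)
    fix x y
    have "D2h \<xi> x \<bullet> y = D2h \<xi> y \<bullet> x" using second_derivative_symmetric[OF U D1 D2 D2c xi] .
    then show "A x \<bullet> y = A y \<bullet> x"
      unfolding A_def by (simp only: inner_add_left inner_scaleR_left inner_commute[of x y])
  qed
  have "dim {y. \<nu> \<bullet> y = 0} = CARD('n)" using dim_hyperplane[of \<nu>] nz unfolding \<nu>_def by simp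
  then obtain f :: "'n \<Rightarrow> 'n pt" where f: "\<forall>i j. f i \<bullet> f j = (if i = j then 1 else 0)"
    "\<forall>i. f i \<in> {y. \<nu> \<bullet> y = 0}"
    "\<forall>i. \<forall>y\<in>{y. \<nu> \<bullet> y = 0}. A (f i) \<bullet> y = (A (f i) \<bullet> f i) * (f i \<bullet> y)"
    using self_adjoint_indexed_eigenbasis[OF lin sym subspace_hyperplane] by blast
  have W: "Wform \<theta> h Dh D2h \<xi> X Y = A X \<bullet> Y" for X Y
    unfolding Wform_def A_def \<nu>_def by (simp add: inner_add_left algebra_simps)
  have "is_eigendecomp \<theta> h Dh D2h \<xi> (\<lambda>i. A (f i) \<bullet> f i) f"
    unfolding is_eigendecomp_def W
  proof (intro conjI allI impI)
    show "f i \<bullet> cap_normal \<theta> \<xi> = 0" for i using f(2) unfolding \<nu>_def by (simp add: inner_commute)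
    show "A (f i) \<bullet> Y = (A (f i) \<bullet> f i) * (f i \<bullet> Y)" if "Y \<bullet> cap_normal \<theta> \<xi> = 0" for i Y
    proof -
      have "Y \<in> {y. \<nu> \<bullet> y = 0}" using that unfolding \<nu>_def by (simp add: inner_commute)
      then show ?thesis using f(3) by blast
    qed
  qed (use f(1) in blast)
  then show ?thesis by blast
qed

section \<open>One-sided maxima along great circles\<close>

lemma has_real_derivative_inner_curves:
  fixes a b :: "real \<Rightarrow> 'a::real_inner"
  assumes "(a has_vector_derivative a') (at t)" "(b has_vector_derivative b') (at t)"
  shows "((\<lambda>t. a t \<bullet> b t) has_real_derivative (a t \<bullet> b' + a' \<bullet> b t)) (at t)"
proof -
  have "((\<lambda>t. a t \<bullet> b t) has_derivative (\<lambda>s. a t \<bullet> (s *\<^sub>R b') + (s *\<^sub>R a') \<bullet> b t)) (at t)"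
    using has_derivative_inner[OF assms(1)[unfolded has_vector_derivative_def] assms(2)[unfolded has_vector_derivative_def]] .
  moreover have "(\<lambda>s. a t \<bullet> (s *\<^sub>R b') + (s *\<^sub>R a') \<bullet> b t) = (*) (a t \<bullet> b' + a' \<bullet> b t)"
    by (rule ext) (simp add: algebra_simps)
  ultimately show ?thesis unfolding has_field_derivative_def by simp
qed

lemma deriv_nonpos_at_right_max:
  fixes f :: "real \<Rightarrow> real"
  assumes "DERIV f 0 :> d" "\<delta> > 0" "\<forall>t. 0 < t \<and> t < \<delta> \<longrightarrow> f t \<le> f 0"
  shows "d \<le> 0"
proof (rule ccontr)
  assume "\<not> d \<le> 0"
  then obtain e where e: "e > 0" "\<forall>h>0. h < e \<longrightarrow> f 0 < f (0 + h)"
    using DERIV_pos_inc_right[OF assms(1)] by auto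
  define t where "t = min \<delta> e / 2"
  have "0 < t" "t < \<delta>" "t < e" unfolding t_def using e assms(2) by auto
  then show False using e assms(3) by force
qed

lemma deriv2_nonpos_at_right_max:
  fixes f f' :: "real \<Rightarrow> real"
  assumes "\<delta> > 0" "\<forall>t. \<bar>t\<bar> < \<delta> \<longrightarrow> DERIV f t :> f' t" "DERIV f' 0 :> d" "f' 0 = 0"
    "\<forall>t. 0 < t \<and> t < \<delta> \<longrightarrow> f t \<le> f 0"
  shows "d \<le> 0"
proof (rule ccontr)
  assume "\<not> d \<le> 0"
  then obtain e where e: "e > 0" "\<forall>h>0. h < e \<longrightarrow> f' 0 < f' (0 + h)"
    using DERIV_pos_inc_right[OF assms(3)] by auto
  define t where "t = min \<delta> e / 2"
  have t: "0 < t" "t < \<delta>" "t < e" unfolding t_def using e assms(1) by auto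
  have "\<exists>z. 0 < z \<and> z < t \<and> f t - f 0 = (t - 0) * f' z"
    by (rule MVT2[OF t(1)]) (use assms(2) t in auto)
  then obtain z where z: "0 < z" "z < t" "f t - f 0 = t * f' z" by auto
  have "f' z > 0" using e z t assms(4) by force
  then have "f t > f 0" using z t by (simp add: algebra_simps)
  then show False using assms(5) t by force
qed

lemma nonpos_if_le_small_multiples:
  fixes q B C :: real
  assumes "\<forall>\<epsilon>. 0 < \<epsilon> \<and> \<epsilon> \<le> 1 \<longrightarrow> q \<le> \<epsilon> * B + \<epsilon>^2 * C"
  shows "q \<le> 0"
proof (rule ccontr)
  assume "\<not> q \<le> 0"
  then have q: "q > 0" by simp
  define K where "K = \<bar>B\<bar> + \<bar>C\<bar> + 1"
  have K: "K > 0" unfolding K_def by simp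
  define e where "e = min 1 (q / (2 * K))"
  have e: "0 < e" "e \<le> 1" "e \<le> q / (2 * K)" unfolding e_def using q K by auto
  have "q \<le> e * B + e^2 * C" using assms e by blast
  also have "\<dots> \<le> e * \<bar>B\<bar> + e * \<bar>C\<bar>"
  proof -
    have "e * B \<le> e * \<bar>B\<bar>" using e by (simp add: mult_left_mono)
    moreover have "e^2 * C \<le> e^2 * \<bar>C\<bar>" by (simp add: mult_left_mono)
    moreover have "e^2 * \<bar>C\<bar> \<le> e * \<bar>C\<bar>" using e
      by (simp add: power2_eq_square mult_right_mono mult_left_le_one_le)
    ultimately show ?thesis by linarith
  qed
  also have "\<dots> < e * K" unfolding K_def using e by (simp add: algebra_simps)
  also have "\<dots> \<le> q / 2" using e K by (simp add: field_simps)
  finally show False using q by simp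
qed

lemma great_circle_right_max_conditions:
  fixes g :: "'a::real_inner \<Rightarrow> real"
  assumes U: "open U" "x0 \<in> U" and x0: "x0 = c + \<nu>"
    and dg: "\<forall>x\<in>U. (g has_derivative (\<lambda>w. G x \<bullet> w)) (at x)"
    and dG: "(G has_derivative G') (at x0)"
    and d: "0 < d" "\<forall>t. 0 < t \<and> t < d \<longrightarrow> g (c + cos t *\<^sub>R \<nu> + sin t *\<^sub>R w) \<le> g x0"
  shows "G x0 \<bullet> w \<le> 0" and "G x0 \<bullet> w = 0 \<Longrightarrow> G' w \<bullet> w \<le> G x0 \<bullet> \<nu>"
proof -
  define \<gamma> where "\<gamma> t = c + cos t *\<^sub>R \<nu> + sin t *\<^sub>R w" for t
  define \<gamma>' where "\<gamma>' t = - sin t *\<^sub>R \<nu> + cos t *\<^sub>R w" for t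
  have d\<gamma>: "(\<gamma> has_vector_derivative \<gamma>' t) (at t)" for t
    unfolding \<gamma>_def \<gamma>'_def has_vector_derivative_def
    by (auto intro!: derivative_eq_intros simp: algebra_simps)
  have d\<gamma>': "(\<gamma>' has_vector_derivative (- cos t *\<^sub>R \<nu> - sin t *\<^sub>R w)) (at t)" for t
    unfolding \<gamma>'_def has_vector_derivative_def
    by (auto intro!: derivative_eq_intros simp: algebra_simps)
  have \<gamma>0: "\<gamma> 0 = x0" "\<gamma>' 0 = w" unfolding \<gamma>_def \<gamma>'_def x0 by simp_all
  obtain e where e: "e > 0" "\<forall>t. \<bar>t\<bar> < e \<longrightarrow> \<gamma> t \<in> U"
  proof -
    obtain r where r: "r > 0" "ball x0 r \<subseteq> U" using U open_contains_ball by blast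
    have "isCont \<gamma> 0" unfolding \<gamma>_def by (intro continuous_intros)
    then obtain e where "e > 0" "\<forall>t. dist t 0 < e \<longrightarrow> dist (\<gamma> t) (\<gamma> 0) < r"
      using r(1) unfolding continuous_at_eps_delta by blast
    then show ?thesis using that r(2) \<gamma>0(1) by (auto simp: dist_commute subset_iff)
  qed
  define f' where "f' t = G (\<gamma> t) \<bullet> \<gamma>' t" for t
  have df: "DERIV (\<lambda>t. g (\<gamma> t)) t :> f' t" if "\<bar>t\<bar> < e" for t
    unfolding f'_def has_real_derivative_iff_has_vector_derivative
    using has_vector_derivative_comp_curve[OF _ d\<gamma>] dg e that by blast
  have df'0: "DERIV f' 0 :> (G' w \<bullet> w - G x0 \<bullet> \<nu>)"
  proof -
    have "((\<lambda>t. G (\<gamma> t)) has_vector_derivative G' w) (at 0)"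
      using has_vector_derivative_comp_curve[OF _ d\<gamma>, of G G' 0] dG \<gamma>0 by simp
    from has_real_derivative_inner_curves[OF this d\<gamma>'] show ?thesis
      unfolding f'_def using \<gamma>0 by (simp add: inner_commute)
  qed
  have le: "\<forall>t. 0 < t \<and> t < min d e \<longrightarrow> g (\<gamma> t) \<le> g (\<gamma> 0)"
    using d \<gamma>0 unfolding \<gamma>_def by simp
  show "G x0 \<bullet> w \<le> 0"
    using deriv_nonpos_at_right_max[OF df _ le] e d \<gamma>0 unfolding f'_def by simp
  show "G' w \<bullet> w \<le> G x0 \<bullet> \<nu>" if "G x0 \<bullet> w = 0"
    using deriv2_nonpos_at_right_max[OF _ _ df'0 _ le] df e d \<gamma>0 that unfolding f'_def by simp
qed

lemma linear_zero_if_nonpos_on_open_halfspace: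
  fixes L :: "'a::real_inner \<Rightarrow> real"
  assumes L: "linear L" and T: "subspace T" "w0 \<in> T" "w0 \<noteq> 0" and Lw0: "L w0 = 0"
    and nonpos: "\<forall>y\<in>T. y \<bullet> w0 < 0 \<longrightarrow> L y \<le> 0" and z: "z \<in> T"
  shows "L z = 0"
proof -
  define z' where "z' = z - ((z \<bullet> w0) / (w0 \<bullet> w0)) *\<^sub>R w0"
  have z'T: "z' \<in> T" unfolding z'_def using T z by (simp add: subspace_diff subspace_scale)
  have "z' \<bullet> w0 = 0" unfolding z'_def using T(3) by (simp add: inner_diff_left)
  then have "(z' - w0) \<bullet> w0 < 0" "(- z' - w0) \<bullet> w0 < 0" using T(3)
    by (simp_all add: inner_diff_left)
  moreover have "z' - w0 \<in> T" "- z' - w0 \<in> T" using z'T T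
    by (simp_all add: subspace_diff subspace_neg)
  ultimately have "L (z' - w0) \<le> 0" "L (- z' - w0) \<le> 0" using nonpos by blast+
  then have "L z' = 0" using Lw0 by (simp add: linear_diff[OF L] linear_neg[OF L])
  then show ?thesis unfolding z'_def using Lw0 by (simp add: linear_diff[OF L] linear_scale[OF L])
qed

lemma quadratic_nonpos_if_nonpos_on_open_halfspace:
  fixes A :: "'a::real_inner \<Rightarrow> 'a"
  assumes A: "linear A" and T: "subspace T" "w0 \<in> T" "w0 \<noteq> 0"
    and nonpos: "\<forall>y\<in>T. y \<bullet> w0 < 0 \<longrightarrow> A y \<bullet> y \<le> 0" and v: "v \<in> T"
  shows "A v \<bullet> v \<le> 0"
proof -
  have neg: "A (- y) \<bullet> (- y) = A y \<bullet> y" for y by (simp add: linear_neg[OF A])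
  consider "v \<bullet> w0 < 0" | "(- v) \<bullet> w0 < 0" | "v \<bullet> w0 = 0" by fastforce
  then show ?thesis
  proof cases
    case 1 then show ?thesis using nonpos v by blast
  next
    case 2 then show ?thesis using nonpos v T neg[of v] by (metis subspace_neg)
  next
    case 3
    text \<open>Perturb \<open>v\<close> into the open half-space and let the perturbation tend to zero.\<close>
    have "A v \<bullet> v \<le> \<epsilon> * (A v \<bullet> w0 + A w0 \<bullet> v) + \<epsilon>^2 * (- (A w0 \<bullet> w0))" if "0 < \<epsilon>" for \<epsilon>
    proof -
      have "(v - \<epsilon> *\<^sub>R w0) \<bullet> w0 < 0" using 3 that T(3) by (simp add: inner_diff_left)
      moreover have "v - \<epsilon> *\<^sub>R w0 \<in> T" using v T by (simp add: subspace_diff subspace_scale)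
      ultimately have "A (v - \<epsilon> *\<^sub>R w0) \<bullet> (v - \<epsilon> *\<^sub>R w0) \<le> 0" using nonpos by blast
      then show ?thesis
        by (simp add: linear_diff[OF A] linear_scale[OF A] inner_diff_left inner_diff_right
            power2_eq_square algebra_simps)
    qed
    then show ?thesis using nonpos_if_le_small_multiples by blast
  qed
qed

section \<open>The spherical cap\<close>

lemma inner_eN: "y \<bullet> (eN :: ('n::finite) pt) = - snd y"
  unfolding eN_def by (simp add: inner_Pair_0)

lemma snd_eN [simp]: "snd (eN :: ('n::finite) pt) = -1"
  by (simp add: eN_def)

lemma inner_eN_eN [simp]: "eN \<bullet> (eN :: ('n::finite) pt) = 1"
  by (simp add: inner_eN)

lemma cap_eq_sphere_inter: "cap \<theta> = sphere (cos \<theta> *\<^sub>R eN) 1 \<inter> {\<xi> :: ('n::finite) pt. 0 \<le> snd \<xi>}"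
  unfolding cap_def by (auto simp: dist_norm norm_minus_commute)

lemma compact_cap: "compact (cap \<theta> :: ('n::finite) pt set)"
  unfolding cap_eq_sphere_inter
  by (intro compact_Int_closed compact_sphere closed_Collect_le continuous_intros)

lemma norm_cap_normal: "\<xi> \<in> cap \<theta> \<Longrightarrow> norm (cap_normal \<theta> \<xi>) = 1"
  unfolding cap_def cap_normal_def by simp

lemma ell_eq_cap_normal: "ell \<theta> \<xi> = 1 + cos \<theta> * (cap_normal \<theta> \<xi> \<bullet> eN)"
proof -
  have "ell \<theta> \<xi> = (sin \<theta>)\<^sup>2 + (cos \<theta>)\<^sup>2 + cos \<theta> * (cap_normal \<theta> \<xi> \<bullet> eN)"
    unfolding ell_def cap_normal_def
      by (simp add: inner_diff_left inner_eN eN_def algebra_simps power2_eq_square)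
  then show ?thesis by simp
qed

lemma abs_cos_less_one: "0 < \<theta> \<Longrightarrow> \<theta> < pi \<Longrightarrow> \<bar>cos \<theta>\<bar> < 1"
proof -
  assume "0 < \<theta>" "\<theta> < pi"
  then have "(sin \<theta>)^2 > 0" using sin_gt_zero[of \<theta>] by simp
  then have "(cos \<theta>)^2 < 1" using sin_squared_eq[of \<theta>] by linarith
  then show ?thesis by (simp add: abs_square_less_1)
qed

lemma ell_pos:
  assumes "0 < \<theta>" "\<theta> < pi" "\<xi> \<in> cap \<theta>"
  shows "ell \<theta> \<xi> > 0"
proof -
  have "\<bar>cap_normal \<theta> \<xi> \<bullet> eN\<bar> \<le> 1"
    using Cauchy_Schwarz_ineq2[of "cap_normal \<theta> \<xi>" eN] norm_cap_normal[OF assms(3)]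
    by (simp add: eN_def)
  then have "\<bar>cos \<theta> * (cap_normal \<theta> \<xi> \<bullet> eN)\<bar> < 1"
  proof -
    have "\<bar>cos \<theta>\<bar> * \<bar>cap_normal \<theta> \<xi> \<bullet> eN\<bar> \<le> \<bar>cos \<theta>\<bar>"
      using \<open>\<bar>cap_normal \<theta> \<xi> \<bullet> eN\<bar> \<le> 1\<close> by (simp add: mult_left_le)
    then show ?thesis using abs_cos_less_one[OF assms(1,2)] by (simp add: abs_mult)
  qed
  then show ?thesis unfolding ell_eq_cap_normal by linarith
qed

lemma great_circle_in_cap:
  assumes \<xi>: "\<xi> \<in> cap \<theta>" and w: "w \<bullet> cap_normal \<theta> \<xi> = 0" "norm w = 1"
    and dir: "0 < snd \<xi> \<or> 0 < snd w"
  obtains d where "d > 0"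
    "\<forall>t. 0 < t \<and> t < d \<longrightarrow> cos \<theta> *\<^sub>R eN + cos t *\<^sub>R cap_normal \<theta> \<xi> + sin t *\<^sub>R w \<in> cap \<theta>"
proof -
  define \<nu> where "\<nu> = cap_normal \<theta> \<xi>"
  have \<nu>\<nu>: "\<nu> \<bullet> \<nu> = 1" and ww: "w \<bullet> w = 1"
    using norm_cap_normal[OF \<xi>] w(2) unfolding \<nu>_def by (simp_all add: dot_square_norm)
  have sphere: "norm (cos t *\<^sub>R \<nu> + sin t *\<^sub>R w) = 1" for t
  proof -
    have "(cos t *\<^sub>R \<nu> + sin t *\<^sub>R w) \<bullet> (cos t *\<^sub>R \<nu> + sin t *\<^sub>R w) = (cos t)^2 + (sin t)^2"
      using w(1) \<nu>\<nu> ww unfolding \<nu>_def[symmetric]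
      by (simp add: inner_add_left inner_add_right inner_commute power2_eq_square algebra_simps)
    then show ?thesis by (simp add: norm_eq_1)
  qed
  define \<phi> where "\<phi> t = - cos \<theta> + cos t * snd \<nu> + sin t * snd w" for t
  have \<phi>0: "\<phi> 0 = snd \<xi>" unfolding \<phi>_def \<nu>_def cap_normal_def eN_def by simp
  obtain d where d: "d > 0" "\<forall>t. 0 < t \<and> t < d \<longrightarrow> 0 \<le> \<phi> t"
  proof (cases "0 < snd \<xi>")
    case True
    have "isCont \<phi> 0" unfolding \<phi>_def by (intro continuous_intros)
    then obtain d where d: "d > 0" "\<forall>t. dist t 0 < d \<longrightarrow> dist (\<phi> t) (\<phi> 0) < snd \<xi>"
      using True unfolding continuous_at_eps_delta by blast
    have "0 \<le> \<phi> t" if "0 < t" "t < d" for t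
      using d(2)[rule_format, of t] that \<phi>0 by (auto simp: dist_real_def)
    then show ?thesis using that d(1) by blast
  next
    case False
    then have "0 < snd w" "snd \<xi> = 0" using dir \<xi> unfolding cap_def by auto
    moreover have "DERIV \<phi> 0 :> snd w"
      unfolding \<phi>_def by (auto intro!: derivative_eq_intros)
    ultimately obtain d where "d > 0" "\<forall>t>0. t < d \<longrightarrow> \<phi> 0 < \<phi> (0 + t)"
      using DERIV_pos_inc_right by blast
    then show ?thesis using that \<phi>0 \<open>snd \<xi> = 0\<close> by (metis add_0 less_le)
  qed
  have "cos \<theta> *\<^sub>R eN + cos t *\<^sub>R \<nu> + sin t *\<^sub>R w \<in> cap \<theta>" if "0 < t" "t < d" for t
    using sphere[of t] d(2) that unfolding cap_def \<phi>_def by (simp add: eN_def algebra_simps)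
  then show ?thesis using that d(1) unfolding \<nu>_def by blast
qed

lemma cap_normal_inner_eN_boundary:
  "\<xi> \<in> cap_boundary \<theta> \<Longrightarrow> cap_normal \<theta> \<xi> \<bullet> eN = - cos \<theta>"
  unfolding cap_boundary_def cap_normal_def by (simp add: inner_diff_left inner_eN)

lemma conormal_cap_boundary:
  assumes "0 < \<theta>" "\<theta> < pi" "\<xi> \<in> cap_boundary \<theta>"
  defines "\<nu> \<equiv> cap_normal \<theta> \<xi>"
  shows "conormal \<theta> \<xi> = (eN - (eN \<bullet> \<nu>) *\<^sub>R \<nu>) /\<^sub>R sin \<theta>"
    and "(eN - (eN \<bullet> \<nu>) *\<^sub>R \<nu>) \<bullet> eN = (sin \<theta>)^2"
    and "(eN - (eN \<bullet> \<nu>) *\<^sub>R \<nu>) \<bullet> \<nu> = 0"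
    and "y \<bullet> \<nu> = 0 \<Longrightarrow> y \<bullet> (eN - (eN \<bullet> \<nu>) *\<^sub>R \<nu>) = - snd y"
proof -
  have \<nu>\<nu>: "\<nu> \<bullet> \<nu> = 1"
    using norm_cap_normal[of \<xi> \<theta>] assms(3) unfolding \<nu>_def cap_boundary_def
      by (simp add: dot_square_norm)
  show "(eN - (eN \<bullet> \<nu>) *\<^sub>R \<nu>) \<bullet> \<nu> = 0" using \<nu>\<nu> by (simp add: inner_diff_left)
  show "y \<bullet> (eN - (eN \<bullet> \<nu>) *\<^sub>R \<nu>) = - snd y" if "y \<bullet> \<nu> = 0"
    using that by (simp add: inner_diff_right inner_eN)
  have "\<nu> \<bullet> eN = - cos \<theta>" "eN \<bullet> \<nu> = - cos \<theta>"
    using cap_normal_inner_eN_boundary[OF assms(3)] unfolding \<nu>_def by (simp_all add: inner_commute)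
  then have "(eN - (eN \<bullet> \<nu>) *\<^sub>R \<nu>) \<bullet> eN = 1 - (cos \<theta>)^2"
    by (simp add: inner_diff_left inner_add_left power2_eq_square)
  then show w0eN: "(eN - (eN \<bullet> \<nu>) *\<^sub>R \<nu>) \<bullet> eN = (sin \<theta>)^2" by (simp add: sin_squared_eq)
  have "(eN - (eN \<bullet> \<nu>) *\<^sub>R \<nu>) \<bullet> (eN - (eN \<bullet> \<nu>) *\<^sub>R \<nu>) = (eN - (eN \<bullet> \<nu>) *\<^sub>R \<nu>) \<bullet> eN"
    using \<nu>\<nu> by (simp add: inner_diff_left inner_diff_right inner_commute)
  then have "norm (eN - (eN \<bullet> \<nu>) *\<^sub>R \<nu>) = sin \<theta>"
    using w0eN sin_gt_zero[OF assms(1,2)] by (simp add: norm_eq_sqrt_inner)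
  then show "conormal \<theta> \<xi> = (eN - (eN \<bullet> \<nu>) *\<^sub>R \<nu>) /\<^sub>R sin \<theta>"
    unfolding conormal_def Let_def \<nu>_def by simp
qed

section \<open>Comparison with ell at the extrema of h / ell\<close>

locale cap_robin =
  fixes \<theta> :: real and h :: "('n::finite) pt \<Rightarrow> real" and Dh :: "'n pt \<Rightarrow> 'n pt"
    and D2h :: "'n pt \<Rightarrow> 'n pt \<Rightarrow> 'n pt" and U :: "'n pt set"
  assumes theta: "0 < \<theta>" "\<theta> < pi"
    and U: "open U" "cap \<theta> \<subseteq> U"
    and D1: "\<forall>x\<in>U. (h has_derivative (\<lambda>v. Dh x \<bullet> v)) (at x)"
    and D2: "\<forall>x\<in>U. (Dh has_derivative D2h x) (at x)"
    and D2c: "\<forall>v. continuous_on U (\<lambda>x. D2h x v)"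
    and robin: "\<forall>\<xi>\<in>cap_boundary \<theta>. Dh \<xi> \<bullet> conormal \<theta> \<xi> = cot \<theta> * h \<xi>"
begin

lemma touching_max_direction_conditions:
  assumes \<xi>0: "\<xi>0 \<in> cap \<theta>" and le: "\<forall>\<xi>\<in>cap \<theta>. h \<xi> \<le> a * ell \<theta> \<xi>" and eq: "h \<xi>0 = a * ell \<theta> \<xi>0"
    and y: "y \<bullet> cap_normal \<theta> \<xi>0 = 0" "y \<noteq> 0" "0 < snd \<xi>0 \<or> 0 < snd y"
  defines "G0 \<equiv> Dh \<xi>0 - (a * cos \<theta>) *\<^sub>R eN"
  shows "G0 \<bullet> y \<le> 0" and "G0 \<bullet> y = 0 \<Longrightarrow> D2h \<xi>0 y \<bullet> y \<le> (G0 \<bullet> cap_normal \<theta> \<xi>0) * (y \<bullet> y)"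
proof -
  define u where "u = y /\<^sub>R norm y"
  define G where "G x = Dh x - (a * cos \<theta>) *\<^sub>R eN" for x
  have u: "u \<bullet> cap_normal \<theta> \<xi>0 = 0" "norm u = 1" "0 < snd \<xi>0 \<or> 0 < snd u"
    using y unfolding u_def by auto
  obtain d where d: "d > 0"
    "\<forall>t. 0 < t \<and> t < d \<longrightarrow> cos \<theta> *\<^sub>R eN + cos t *\<^sub>R cap_normal \<theta> \<xi>0 + sin t *\<^sub>R u \<in> cap \<theta>"
    using great_circle_in_cap[OF \<xi>0 u] by blast
  have dg: "\<forall>x\<in>U. ((\<lambda>x. h x - a * ell \<theta> x) has_derivative (\<lambda>w. G x \<bullet> w)) (at x)"
    using D1 unfolding G_def ell_def
    by (auto intro!: derivative_eq_intros simp: inner_diff_right inner_commute)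
  have dG: "(G has_derivative D2h \<xi>0) (at \<xi>0)"
    using D2 \<xi>0 U unfolding G_def by (auto intro!: derivative_eq_intros)
  have x0: "\<xi>0 = cos \<theta> *\<^sub>R eN + cap_normal \<theta> \<xi>0" unfolding cap_normal_def by simp
  have "\<forall>t. 0 < t \<and> t < d \<longrightarrow>
      h (cos \<theta> *\<^sub>R eN + cos t *\<^sub>R cap_normal \<theta> \<xi>0 + sin t *\<^sub>R u)
        - a * ell \<theta> (cos \<theta> *\<^sub>R eN + cos t *\<^sub>R cap_normal \<theta> \<xi>0 + sin t *\<^sub>R u)
      \<le> h \<xi>0 - a * ell \<theta> \<xi>0"
    using d(2) le eq by simp
  note circle = great_circle_right_max_conditions[OF U(1) _ x0 dg dG d(1) this]
  have "\<xi>0 \<in> U" using \<xi>0 U by blast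
  then have "G \<xi>0 \<bullet> u \<le> 0" "G \<xi>0 \<bullet> u = 0 \<Longrightarrow> D2h \<xi>0 u \<bullet> u \<le> G \<xi>0 \<bullet> cap_normal \<theta> \<xi>0"
    using circle by blast+
  moreover have "D2h \<xi>0 u \<bullet> u = (D2h \<xi>0 y \<bullet> y) / (norm y)^2" "G \<xi>0 \<bullet> u = (G \<xi>0 \<bullet> y) / norm y"
    using has_derivative_linear[OF dG] unfolding u_def
    by (simp_all add: linear_scale power2_eq_square divide_inverse)
  moreover have "y \<bullet> y = (norm y)^2" by (simp add: power2_norm_eq_inner)
  ultimately show "G0 \<bullet> y \<le> 0" and "G0 \<bullet> y = 0 \<Longrightarrow> D2h \<xi>0 y \<bullet> y \<le> (G0 \<bullet> cap_normal \<theta> \<xi>0) * (y \<bullet> y)"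
    using y(2) unfolding G0_def G_def by (auto simp: divide_le_0_iff pos_divide_le_eq mult.commute)
qed

lemma touching_max_tangential_gradient_zero:
  assumes \<xi>0: "\<xi>0 \<in> cap \<theta>" and le: "\<forall>\<xi>\<in>cap \<theta>. h \<xi> \<le> a * ell \<theta> \<xi>" and eq: "h \<xi>0 = a * ell \<theta> \<xi>0"
    and z: "z \<bullet> cap_normal \<theta> \<xi>0 = 0"
  shows "(Dh \<xi>0 - (a * cos \<theta>) *\<^sub>R eN) \<bullet> z = 0"
proof -
  define \<nu> where "\<nu> = cap_normal \<theta> \<xi>0"
  define G0 where "G0 = Dh \<xi>0 - (a * cos \<theta>) *\<^sub>R eN"
  note dir = touching_max_direction_conditions(1)[OF \<xi>0 le eq, folded G0_def \<nu>_def]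
  show ?thesis
  proof (cases "0 < snd \<xi>0")
    case True
    then show ?thesis
      using dir[of z] dir[of "- z"] z unfolding \<nu>_def G0_def by (cases "z = 0") auto
  next
    case False
    then have \<xi>b: "\<xi>0 \<in> cap_boundary \<theta>" using \<xi>0 unfolding cap_def cap_boundary_def by auto
    define w0 where "w0 = eN - (eN \<bullet> \<nu>) *\<^sub>R \<nu>"
    note w0 = conormal_cap_boundary[OF theta \<xi>b, folded \<nu>_def, folded w0_def]
    have sin0: "sin \<theta> > 0" using sin_gt_zero theta by blast
    text \<open>\<open>ell\<close> satisfies the same Robin condition, so \<open>h - a ell\<close> has zero conormal derivative.\<close>
    have "h \<xi>0 = a * (sin \<theta>)^2" using eq \<xi>b unfolding ell_def cap_boundary_def
      by (simp add: inner_eN)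
    moreover have "w0 = sin \<theta> *\<^sub>R conormal \<theta> \<xi>0" using w0(1) sin0 by simp
    then have "Dh \<xi>0 \<bullet> w0 = sin \<theta> * (cot \<theta> * h \<xi>0)" using robin \<xi>b by simp
    ultimately have "Dh \<xi>0 \<bullet> w0 = a * cos \<theta> * (sin \<theta>)^2"
      using sin0 by (simp add: cot_def)
    then have Gw0: "G0 \<bullet> w0 = 0"
      unfolding G0_def using w0(2) by (simp add: inner_diff_left inner_diff_right inner_commute)
    have "w0 \<noteq> 0" using w0(2) sin0 by auto
    moreover have "\<forall>y\<in>{y. y \<bullet> \<nu> = 0}. y \<bullet> w0 < 0 \<longrightarrow> G0 \<bullet> y \<le> 0"
      using dir w0(4) by force
    moreover have "linear (\<lambda>y. G0 \<bullet> y)"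
      by (rule bounded_linear.linear[OF bounded_linear_inner_right])
    ultimately show ?thesis
      using linear_zero_if_nonpos_on_open_halfspace[OF _ subspace_hyperplane2, of "\<lambda>y. G0 \<bullet> y" w0 \<nu> z]
        w0(3) Gw0 z unfolding \<nu>_def G0_def by simp
  qed
qed

lemma Wform_le_at_touching_max:
  assumes \<xi>0: "\<xi>0 \<in> cap \<theta>" and le: "\<forall>\<xi>\<in>cap \<theta>. h \<xi> \<le> a * ell \<theta> \<xi>" and eq: "h \<xi>0 = a * ell \<theta> \<xi>0"
    and v: "v \<bullet> cap_normal \<theta> \<xi>0 = 0"
  shows "Wform \<theta> h Dh D2h \<xi>0 v v \<le> a * (v \<bullet> v)"
proof -
  define \<nu> where "\<nu> = cap_normal \<theta> \<xi>0"
  define G0 where "G0 = Dh \<xi>0 - (a * cos \<theta>) *\<^sub>R eN"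
  define A where "A y = D2h \<xi>0 y - (G0 \<bullet> \<nu>) *\<^sub>R y" for y
  have linD: "linear (D2h \<xi>0)" using D2 \<xi>0 U has_derivative_linear by blast
  have linA: "linear A" unfolding A_def
    by (intro linearI) (auto simp: linear_add[OF linD] linear_scale[OF linD] algebra_simps)
  text \<open>Since \<open>\<nabla>\<^sup>2ell + ell \<sigma> = \<sigma>\<close>, \<open>A\<close> is the form of \<open>h - a ell\<close>.\<close>
  have "Wform \<theta> h Dh D2h \<xi>0 v v = a * (v \<bullet> v) + A v \<bullet> v"
    using eq unfolding Wform_def A_def G0_def \<nu>_def ell_eq_cap_normal
    by (simp add: inner_diff_left inner_commute algebra_simps)
  moreover have "A v \<bullet> v \<le> 0"
  proof -
    have Aneg: "A y \<bullet> y \<le> 0" if y: "y \<bullet> \<nu> = 0" "y \<noteq> 0" "0 < snd \<xi>0 \<or> 0 < snd y" for y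
      using touching_max_direction_conditions(2)[OF \<xi>0 le eq y[unfolded \<nu>_def]]
        touching_max_tangential_gradient_zero[OF \<xi>0 le eq y(1)[unfolded \<nu>_def]]
      unfolding A_def G0_def \<nu>_def by (simp add: inner_diff_left)
    show ?thesis
    proof (cases "0 < snd \<xi>0")
      case True
      then show ?thesis using Aneg[of v] v linear_0[OF linA] unfolding \<nu>_def by (cases "v = 0") auto
    next
      case False
      then have \<xi>b: "\<xi>0 \<in> cap_boundary \<theta>" using \<xi>0 unfolding cap_def cap_boundary_def by auto
      define w0 where "w0 = eN - (eN \<bullet> \<nu>) *\<^sub>R \<nu>"
      note w0 = conormal_cap_boundary[OF theta \<xi>b, folded \<nu>_def, folded w0_def]
      have "w0 \<noteq> 0" using w0(2) sin_gt_zero[OF theta] by auto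
      moreover have "\<forall>y\<in>{y. y \<bullet> \<nu> = 0}. y \<bullet> w0 < 0 \<longrightarrow> A y \<bullet> y \<le> 0"
        using Aneg w0(4) by force
      ultimately show ?thesis
        using quadratic_nonpos_if_nonpos_on_open_halfspace[OF linA subspace_hyperplane2, of w0 \<nu> v]
          w0(3) v unfolding \<nu>_def by simp
    qed
  qed
  ultimately show ?thesis by simp
qed

lemma eigenvalue_le_at_touching_max:
  assumes \<xi>0: "\<xi>0 \<in> cap \<theta>" and le: "\<forall>\<xi>\<in>cap \<theta>. h \<xi> \<le> a * ell \<theta> \<xi>" and eq: "h \<xi>0 = a * ell \<theta> \<xi>0"
    and eig: "is_eigendecomp \<theta> h Dh D2h \<xi>0 lam b"
  shows "lam i \<le> a"
proof -
  have "b i \<bullet> cap_normal \<theta> \<xi>0 = 0" "b i \<bullet> b i = 1"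
    using eig unfolding is_eigendecomp_def by auto
  moreover from this(1) have "Wform \<theta> h Dh D2h \<xi>0 (b i) (b i) = lam i * (b i \<bullet> b i)"
    using eig unfolding is_eigendecomp_def by blast
  ultimately show ?thesis using Wform_le_at_touching_max[OF \<xi>0 le eq, of "b i"] by simp
qed

lemma cap_robin_uminus: "cap_robin \<theta> (\<lambda>x. - h x) (\<lambda>x. - Dh x) (\<lambda>x v. - D2h x v) U"
  using theta U D1 D2 D2c robin
  by unfold_locales (auto intro: has_derivative_minus continuous_on_minus)

lemma eigenvalue_ge_at_touching_min:
  assumes \<xi>0: "\<xi>0 \<in> cap \<theta>" and ge: "\<forall>\<xi>\<in>cap \<theta>. a * ell \<theta> \<xi> \<le> h \<xi>" and eq: "h \<xi>0 = a * ell \<theta> \<xi>0"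
    and eig: "is_eigendecomp \<theta> h Dh D2h \<xi>0 lam b"
  shows "a \<le> lam i"
proof -
  have "is_eigendecomp \<theta> (\<lambda>x. - h x) (\<lambda>x. - Dh x) (\<lambda>x v. - D2h x v) \<xi>0 (\<lambda>i. - lam i) b"
    using eig unfolding is_eigendecomp_def Wform_def by (simp add: algebra_simps)
  moreover have "\<forall>\<xi>\<in>cap \<theta>. - h \<xi> \<le> (- a) * ell \<theta> \<xi>" "- h \<xi>0 = (- a) * ell \<theta> \<xi>0"
    using ge eq by auto
  ultimately have "- lam i \<le> - a"
    using cap_robin.eigenvalue_le_at_touching_max[OF cap_robin_uminus \<xi>0] by blast
  then show ?thesis by simp
qed

lemma eigendecomp_exists_on_cap:
  assumes "\<xi> \<in> cap \<theta>"
  obtains lam b where "is_eigendecomp \<theta> h Dh D2h \<xi> lam b"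
proof -
  have "\<xi> \<in> U" "cap_normal \<theta> \<xi> \<noteq> 0" using assms U norm_cap_normal[OF assms] by auto
  then show ?thesis using eigendecomp_exists[OF U(1) D1 D2 D2c] that by blast
qed

lemma ratio_le_one_at_max:
  assumes \<xi>0: "\<xi>0 \<in> cap \<theta>" and max: "\<forall>\<xi>\<in>cap \<theta>. h \<xi> / ell \<theta> \<xi> \<le> h \<xi>0 / ell \<theta> \<xi>0"
    and pos: "0 < h \<xi>0" and kl: "k \<le> CARD('n)" "l < k" "real (k - l) < q"
    and adm: "\<forall>lam b. is_eigendecomp \<theta> h Dh D2h \<xi>0 lam b \<longrightarrow> lam \<in> Gamma k"
    and eq: "\<forall>lam b. is_eigendecomp \<theta> h Dh D2h \<xi>0 lam b \<longrightarrow> sigma k lam / sigma l lam =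
      real (CARD('n) choose k) / real (CARD('n) choose l) * (h \<xi>0 / ell \<theta> \<xi>0) powr q"
  shows "h \<xi>0 / ell \<theta> \<xi>0 \<le> 1"
proof -
  define a where "a = h \<xi>0 / ell \<theta> \<xi>0"
  have ell: "\<forall>\<xi>\<in>cap \<theta>. 0 < ell \<theta> \<xi>" using ell_pos theta by blast
  have "h \<xi> \<le> a * ell \<theta> \<xi>" if "\<xi> \<in> cap \<theta>" for \<xi>
  proof -
    have "h \<xi> / ell \<theta> \<xi> \<le> a" "0 < ell \<theta> \<xi>" using max[folded a_def] ell that by auto
    then show ?thesis by (simp add: pos_divide_le_eq)
  qed
  then have "\<forall>\<xi>\<in>cap \<theta>. h \<xi> \<le> a * ell \<theta> \<xi>" by blast
  moreover have "h \<xi>0 = a * ell \<theta> \<xi>0" "0 < a" using ell \<xi>0 pos unfolding a_def by auto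
  moreover obtain lam b where eig: "is_eigendecomp \<theta> h Dh D2h \<xi>0 lam b"
    using eigendecomp_exists_on_cap[OF \<xi>0] by blast
  moreover have "lam \<in> Gamma k" "sigma_mean k lam = a powr q * sigma_mean l lam"
    using adm eq eig sigma_mean_eq_of_sigma_quotient[of lam k l] kl unfolding a_def by blast+
  ultimately show ?thesis
    using le_one_of_sigma_mean_eq_powr[OF kl(1,2) _ _ _ kl(3)] eigenvalue_le_at_touching_max[OF \<xi>0]
    unfolding a_def by blast
qed

lemma ratio_ge_one_at_min:
  assumes \<xi>0: "\<xi>0 \<in> cap \<theta>" and min: "\<forall>\<xi>\<in>cap \<theta>. h \<xi>0 / ell \<theta> \<xi>0 \<le> h \<xi> / ell \<theta> \<xi>"
    and pos: "0 < h \<xi>0" and kl: "k \<le> CARD('n)" "l < k" "real (k - l) < q"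
    and adm: "\<forall>lam b. is_eigendecomp \<theta> h Dh D2h \<xi>0 lam b \<longrightarrow> lam \<in> Gamma k"
    and eq: "\<forall>lam b. is_eigendecomp \<theta> h Dh D2h \<xi>0 lam b \<longrightarrow> sigma k lam / sigma l lam =
      real (CARD('n) choose k) / real (CARD('n) choose l) * (h \<xi>0 / ell \<theta> \<xi>0) powr q"
  shows "1 \<le> h \<xi>0 / ell \<theta> \<xi>0"
proof -
  define a where "a = h \<xi>0 / ell \<theta> \<xi>0"
  have ell: "\<forall>\<xi>\<in>cap \<theta>. 0 < ell \<theta> \<xi>" using ell_pos theta by blast
  have "a * ell \<theta> \<xi> \<le> h \<xi>" if "\<xi> \<in> cap \<theta>" for \<xi>
  proof -
    have "a \<le> h \<xi> / ell \<theta> \<xi>" "0 < ell \<theta> \<xi>" using min[folded a_def] ell that by auto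
    then show ?thesis by (simp add: pos_le_divide_eq)
  qed
  then have "\<forall>\<xi>\<in>cap \<theta>. a * ell \<theta> \<xi> \<le> h \<xi>" by blast
  moreover have "h \<xi>0 = a * ell \<theta> \<xi>0" "0 < a" using ell \<xi>0 pos unfolding a_def by auto
  moreover obtain lam b where eig: "is_eigendecomp \<theta> h Dh D2h \<xi>0 lam b"
    using eigendecomp_exists_on_cap[OF \<xi>0] by blast
  moreover have "sigma_mean k lam = a powr q * sigma_mean l lam"
    using adm eq eig sigma_mean_eq_of_sigma_quotient[of lam k l] kl unfolding a_def by blast
  ultimately show ?thesis
    using ge_one_of_sigma_mean_eq_powr[OF kl(1,2) _ _ kl(3)] eigenvalue_ge_at_touching_min[OF \<xi>0]
    unfolding a_def by blast
qed

end

theorem corollary5p2: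
  fixes \<theta> p :: real and k l :: nat
    and h :: "(real^'n::finite) \<times> real \<Rightarrow> real"
    and Dh :: "(real^'n) \<times> real \<Rightarrow> (real^'n) \<times> real"
    and D2h :: "(real^'n) \<times> real \<Rightarrow> (real^'n) \<times> real \<Rightarrow> (real^'n) \<times> real"
    and U :: "((real^'n) \<times> real) set"
  assumes n2: "CARD('n) \<ge> 2"
    and lk: "l < k" and kn: "k \<le> CARD('n)"
    and th: "0 < \<theta>" "\<theta> < pi"
    and p: "p > real k - real l + 1"
    and U: "open U" "cap \<theta> \<subseteq> U"
    and D1: "\<forall>x\<in>U. (h has_derivative (\<lambda>v. Dh x \<bullet> v)) (at x)"
    and D2: "\<forall>x\<in>U. (Dh has_derivative D2h x) (at x)"
    and D2c: "\<forall>v. continuous_on U (\<lambda>x. D2h x v)"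
    and hpos: "\<forall>\<xi>\<in>cap \<theta>. h \<xi> > 0"
    and adm: "\<forall>\<xi>\<in>cap \<theta>. \<forall>lam b. is_eigendecomp \<theta> h Dh D2h \<xi> lam b \<longrightarrow> lam \<in> Gamma k"
    and eq: "\<forall>\<xi>\<in>cap \<theta>. \<forall>lam b. is_eigendecomp \<theta> h Dh D2h \<xi> lam b \<longrightarrow>
               sigma k lam / sigma l lam =
               (real (CARD('n) choose k) / real (CARD('n) choose l)) * (h \<xi> / ell \<theta> \<xi>) powr (p - 1)"
    and bdry: "\<forall>\<xi>\<in>cap_boundary \<theta>. Dh \<xi> \<bullet> conormal \<theta> \<xi> = cot \<theta> * h \<xi>"
  shows "\<forall>\<xi>\<in>cap \<theta>. h \<xi> = ell \<theta> \<xi>"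
proof -
  interpret cap_robin \<theta> h Dh D2h U using th U D1 D2 D2c bdry by unfold_locales
  define u where "u \<xi> = h \<xi> / ell \<theta> \<xi>" for \<xi>
  have q: "real (k - l) < p - 1" using p lk by (simp add: of_nat_diff)
  have "continuous_on (cap \<theta>) h"
    using D1 U has_derivative_continuous by (blast intro: continuous_at_imp_continuous_on)
  moreover have "continuous_on (cap \<theta>) (ell \<theta>)" unfolding ell_def by (intro continuous_intros)
  moreover have "\<forall>\<xi>\<in>cap \<theta>. ell \<theta> \<xi> \<noteq> 0" using ell_pos[OF th] by (metis order_less_irrefl)
  ultimately have cont: "continuous_on (cap \<theta>) u" unfolding u_def by (rule continuous_on_divide)
  show ?thesis
  proof (cases "cap \<theta> = ({} :: 'n pt set)")
    case False
    obtain xM where xM: "xM \<in> cap \<theta>" "\<forall>\<xi>\<in>cap \<theta>. u \<xi> \<le> u xM"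
      using continuous_attains_sup[OF compact_cap False cont] by blast
    obtain xm where xm: "xm \<in> cap \<theta>" "\<forall>\<xi>\<in>cap \<theta>. u xm \<le> u \<xi>"
      using continuous_attains_inf[OF compact_cap False cont] by blast
    have "u xM \<le> 1"
      using ratio_le_one_at_max[OF xM(1) _ _ kn lk q] xM adm eq hpos unfolding u_def by blast
    moreover have "1 \<le> u xm"
      using ratio_ge_one_at_min[OF xm(1) _ _ kn lk q] xm adm eq hpos unfolding u_def by blast
    ultimately have "u \<xi> = 1" if "\<xi> \<in> cap \<theta>" for \<xi>
      using xM(2) xm(2) that by (meson order_antisym order_trans)
    then show ?thesis using ell_pos[OF th] unfolding u_def by (simp add: divide_eq_1_iff)
  qed simp
qed

end
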